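(* For all integers $s\ge1$ and $1\le r\le\min\{m,n\}$, $$\dim(X_r^{\star s})\le\min\big\{s\dim(X_r)-(s-1)\dim(X_1),\ \dim\mathbb{P}(\mathrm{Mat}_{m,n})\big\},$$ i.e. $\dim(X_r^{\star s})\le\min\{sr(m+n-r)-(s-1)(m+n-1),\,mn\}-1$.
   Context: Work over $\mathbb{C}$. $X_r\subset\mathbb{P}(\mathrm{Mat}_{m,n})\cong\mathbb{P}^{mn-1}$ is the variety of $m\times n$ matrices of rank at most $r$ (of dimension $r(m+n-r)-1$). For projective varieties $X,Y\subset\mathbb{P}^N$, the Hadamard product $X\star Y$ is the Zariski closure of $\{p\star q: p\in X,q\in Y,\ p\star q\text{ defined}\}$ where $p\star q=[p_0q_0:\dots:p_Nq_N]$; $X^{\star1}=X$, $X^{\star s}=X\star X^{\star(s-1)}$. *)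

theory Defs
  imports "Jordan_Normal_Form.DL_Rank" "HOL-Library.Extended_Nat"
begin

inductive_set poly_fun :: "nat \<Rightarrow> nat \<Rightarrow> (complex mat \<Rightarrow> complex) set"
  for m n :: nat where
  pf_const: "(\<lambda>A. c) \<in> poly_fun m n"
| pf_var: "i < m \<Longrightarrow> j < n \<Longrightarrow> (\<lambda>A. A $$ (i, j)) \<in> poly_fun m n"
| pf_add: "f \<in> poly_fun m n \<Longrightarrow> g \<in> poly_fun m n \<Longrightarrow> (\<lambda>A. f A + g A) \<in> poly_fun m n"
| pf_mult: "f \<in> poly_fun m n \<Longrightarrow> g \<in> poly_fun m n \<Longrightarrow> (\<lambda>A. f A * g A) \<in> poly_fun m n"

definition zariski_closed :: "nat \<Rightarrow> nat \<Rightarrow> complex mat set \<Rightarrow> bool" where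
  "zariski_closed m n Z \<longleftrightarrow>
     (\<exists>F \<subseteq> poly_fun m n. Z = {A \<in> carrier_mat m n. \<forall>f\<in>F. f A = 0})"

definition zariski_closure :: "nat \<Rightarrow> nat \<Rightarrow> complex mat set \<Rightarrow> complex mat set" where
  "zariski_closure m n S = \<Inter> {Z. zariski_closed m n Z \<and> S \<subseteq> Z}"

definition zariski_irreducible :: "nat \<Rightarrow> nat \<Rightarrow> complex mat set \<Rightarrow> bool" where
  "zariski_irreducible m n Z \<longleftrightarrow> zariski_closed m n Z \<and> Z \<noteq> {} \<and>
     (\<forall>Z1 Z2. zariski_closed m n Z1 \<longrightarrow> zariski_closed m n Z2 \<longrightarrow> Z = Z1 \<union> Z2 \<longrightarrow>
        Z = Z1 \<or> Z = Z2)"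

definition zdim :: "nat \<Rightarrow> nat \<Rightarrow> complex mat set \<Rightarrow> enat" where
  "zdim m n V = Sup {enat k | k. \<exists>Z :: nat \<Rightarrow> complex mat set.
      (\<forall>i\<le>k. zariski_irreducible m n (Z i) \<and> Z i \<subseteq> V) \<and>
      (\<forall>i<k. Z i \<subset> Z (Suc i))}"

definition hadamard :: "complex mat \<Rightarrow> complex mat \<Rightarrow> complex mat" where
  "hadamard A B = mat (dim_row A) (dim_col A) (\<lambda>(i, j). A $$ (i, j) * B $$ (i, j))"

text \<open>Affine cone of X_r: matrices of rank at most r.\<close>
definition rank_le_cone :: "nat \<Rightarrow> nat \<Rightarrow> nat \<Rightarrow> complex mat set" where
  "rank_le_cone m n r = {A \<in> carrier_mat m n. vec_space.rank m A \<le> r}"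

fun hadamard_power_cone :: "nat \<Rightarrow> nat \<Rightarrow> complex mat set \<Rightarrow> nat \<Rightarrow> complex mat set" where
  "hadamard_power_cone m n S 0 = zariski_closure m n S"
| "hadamard_power_cone m n S (Suc k) =
     zariski_closure m n {hadamard A B | A B. A \<in> S \<and> B \<in> hadamard_power_cone m n S k}"

text \<open>hadamard_power_cone m n S k is the affine cone of X^{*(k+1)} when S is the cone of X.\<close>

end

theory Submission
  imports Defs
begin

text \<open>The Krull dimension of a Zariski closed set is at most the transcendence degree of its
  ring of polynomial functions: along a strictly increasing chain of \<open>k + 1\<close> irreducible closed
  sets one finds \<open>k\<close> functions that are algebraically independent on the largest one. Conversely,
  more than \<open>d\<close> polynomials in \<open>d\<close> parameters always satisfy a polynomial relation, so a set that
  is, up to Zariski closure and finite unions, an image of polynomial maps in \<open>d\<close> parameters has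
  transcendence degree at most \<open>d\<close>.

  The affine cone of \<open>X\<^sub>r\<^sup>\<star>\<^sup>s\<close> is the closure of the entrywise products of \<open>s\<close> matrices of rank
  at most \<open>r\<close>. Each factor is parametrised by \<open>r\<close> of its columns and the coefficients expressing
  the other columns in terms of them, \<open>r(m + n - r)\<close> parameters. Rescaling rows and columns
  commutes with the entrywise product, so off a hypersurface all factors but the first can be
  normalised, which removes \<open>m + n - 1\<close> parameters from each of them.\<close>

section \<open>Polynomial functions in finitely many variables\<close>

lemma homogeneous_system_back_substitution:
  fixes e :: "'b \<Rightarrow> 'c \<Rightarrow> 'a::field"
  assumes U: "finite U" "u0 \<in> U" and pivot: "e b u0 \<noteq> 0"
    and sol: "\<forall>\<beta>\<in>B. (\<Sum>u\<in>U - {u0}. (e \<beta> u - e \<beta> u0 * e b u / e b u0) * c u) = 0"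
  shows "\<forall>\<beta>\<in>insert b B. (\<Sum>u\<in>U. e \<beta> u * (c(u0 := - (\<Sum>u\<in>U - {u0}. e b u * c u) / e b u0)) u) = 0"
proof
  fix \<beta> assume \<beta>: "\<beta> \<in> insert b B"
  define c0 where "c0 = - (\<Sum>u\<in>U - {u0}. e b u * c u) / e b u0"
  have "(\<Sum>u\<in>U. e \<beta> u * (c(u0 := c0)) u) = e \<beta> u0 * c0 + (\<Sum>u\<in>U - {u0}. e \<beta> u * c u)"
    using U by (simp add: sum.remove)
  also have "\<dots> = (\<Sum>u\<in>U - {u0}. (e \<beta> u - e \<beta> u0 * e b u / e b u0) * c u)"
    by (simp add: c0_def algebra_simps sum_subtractf sum_distrib_left sum_divide_distrib)
  also have "\<dots> = 0"
    using sol \<beta> pivot by (cases "\<beta> = b") (auto simp: algebra_simps)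
  finally show "(\<Sum>u\<in>U. e \<beta> u * (c(u0 := c0)) u) = 0" .
qed

lemma homogeneous_system_nontrivial_solution:
  fixes e :: "'b \<Rightarrow> 'c \<Rightarrow> 'a::field"
  assumes "finite B" "finite U" "card B < card U"
  shows "\<exists>c. (\<exists>u\<in>U. c u \<noteq> 0) \<and> (\<forall>\<beta>\<in>B. (\<Sum>u\<in>U. e \<beta> u * c u) = 0)"
  using assms
proof (induction B arbitrary: U e rule: finite_induct)
  case empty
  then obtain u where "u \<in> U" by fastforce
  then show ?case by (intro exI[of _ "\<lambda>x. if x = u then 1 else 0"]) auto
next
  case (insert b B)
  show ?case
  proof (cases "\<forall>u\<in>U. e b u = 0")
    case True
    with insert show ?thesis by simp
  next
    case False
    then obtain u0 where u0: "u0 \<in> U" "e b u0 \<noteq> 0" by blast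
    have "finite (U - {u0})" "card B < card (U - {u0})" using insert u0 by simp_all
    then obtain c where c: "\<exists>u\<in>U - {u0}. c u \<noteq> 0"
      "\<forall>\<beta>\<in>B. (\<Sum>u\<in>U - {u0}. (e \<beta> u - e \<beta> u0 * e b u / e b u0) * c u) = 0"
      using insert.IH[of "U - {u0}" "\<lambda>\<beta> u. e \<beta> u - e \<beta> u0 * e b u / e b u0"] by blast
    show ?thesis
      using homogeneous_system_back_substitution[OF insert.prems(1) u0 c(2)] c(1)
      by (intro exI[of _ "c(u0 := - (\<Sum>u\<in>U - {u0}. e b u * c u) / e b u0)"]) auto
  qed
qed

definition monomial :: "'v set \<Rightarrow> ('v \<Rightarrow> nat) \<Rightarrow> ('v \<Rightarrow> 'a::comm_semiring_1) \<Rightarrow> 'a" where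
  "monomial I \<alpha> y = (\<Prod>i\<in>I. y i ^ \<alpha> i)"

definition exps_upto :: "'v set \<Rightarrow> nat \<Rightarrow> ('v \<Rightarrow> nat) set" where
  "exps_upto I D = I \<rightarrow>\<^sub>E {..D}"

definition poly_upto :: "'v set \<Rightarrow> nat \<Rightarrow> (('v \<Rightarrow> 'a::comm_semiring_1) \<Rightarrow> 'a) \<Rightarrow> bool" where
  "poly_upto I D f \<longleftrightarrow> (\<exists>c. \<forall>y. f y = (\<Sum>\<alpha>\<in>exps_upto I D. c \<alpha> * monomial I \<alpha> y))"

definition poly_in :: "'v set \<Rightarrow> (('v \<Rightarrow> 'a::comm_semiring_1) \<Rightarrow> 'a) \<Rightarrow> bool" where
  "poly_in I f \<longleftrightarrow> (\<exists>D. poly_upto I D f)"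

lemma finite_exps_upto [simp]: "finite I \<Longrightarrow> finite (exps_upto I D)"
  unfolding exps_upto_def by (simp add: finite_PiE)

lemma card_exps_upto: "finite I \<Longrightarrow> card (exps_upto I D) = (D + 1) ^ card I"
  unfolding exps_upto_def by (simp add: card_PiE)

lemma exps_upto_mono: "D \<le> D' \<Longrightarrow> exps_upto I D \<subseteq> exps_upto I D'"
  unfolding exps_upto_def by (auto simp: PiE_def Pi_def)

lemma exps_upto_add:
  "\<alpha> \<in> exps_upto I D1 \<Longrightarrow> \<beta> \<in> exps_upto I D2 \<Longrightarrow> restrict (\<lambda>i. \<alpha> i + \<beta> i) I \<in> exps_upto I (D1 + D2)"
  unfolding exps_upto_def by (auto simp: PiE_iff intro: add_mono)

lemma monomial_add: "monomial I (\<lambda>i. \<alpha> i + \<beta> i) y = monomial I \<alpha> y * monomial I \<beta> y"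
  unfolding monomial_def by (simp add: power_add prod.distrib)

lemma monomial_cong: "(\<And>i. i \<in> I \<Longrightarrow> \<alpha> i = \<beta> i) \<Longrightarrow> monomial I \<alpha> y = monomial I \<beta> y"
  unfolding monomial_def by (rule prod.cong) auto

lemma monomial_local: "(\<And>i. i \<in> I \<Longrightarrow> y i = y' i) \<Longrightarrow> monomial I \<alpha> y = monomial I \<alpha> y'"
  unfolding monomial_def by (rule prod.cong) auto

lemma monomial_insert:
  assumes "finite K" "v \<notin> K"
  shows "monomial (insert v K) (\<alpha>(v := j)) y = monomial K \<alpha> y * y v ^ j"
proof -
  have "(\<Prod>i\<in>K. y i ^ (\<alpha>(v := j)) i) = monomial K \<alpha> y"
    unfolding monomial_def using assms(2) by (intro prod.cong) auto
  then show ?thesis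
    unfolding monomial_def using assms by (simp add: mult.commute)
qed

lemma poly_upto_mono:
  assumes "finite I" "D \<le> D'" "poly_upto I D f"
  shows "poly_upto I D' f"
proof -
  obtain c where c: "\<forall>y. f y = (\<Sum>\<alpha>\<in>exps_upto I D. c \<alpha> * monomial I \<alpha> y)"
    using assms(3) unfolding poly_upto_def by (elim exE)
  define c' where "c' \<alpha> = (if \<alpha> \<in> exps_upto I D then c \<alpha> else 0)" for \<alpha>
  have "f y = (\<Sum>\<alpha>\<in>exps_upto I D'. c' \<alpha> * monomial I \<alpha> y)" for y
    unfolding c[rule_format] c'_def
    by (rule sum.mono_neutral_cong_left) (use assms exps_upto_mono[OF assms(2)] in auto)
  then show ?thesis unfolding poly_upto_def by blast
qed

lemma poly_upto_sum_monomials: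
  assumes "finite I" "finite S" "\<forall>s\<in>S. h s \<in> exps_upto I D"
  shows "poly_upto I D (\<lambda>y. \<Sum>s\<in>S. w s * monomial I (h s) y)"
proof -
  define c where "c = (\<lambda>\<gamma>. \<Sum>s\<in>{s\<in>S. h s = \<gamma>}. w s)"
  have "(\<Sum>s\<in>S. w s * monomial I (h s) y)
      = (\<Sum>\<gamma>\<in>exps_upto I D. \<Sum>s\<in>{s\<in>S. h s = \<gamma>}. w s * monomial I (h s) y)" for y
    by (rule sum.group[symmetric]) (use assms in auto)
  also have "\<dots> y = (\<Sum>\<gamma>\<in>exps_upto I D. c \<gamma> * monomial I \<gamma> y)" for y
    unfolding c_def sum_distrib_right by (rule sum.cong) auto
  finally show ?thesis unfolding poly_upto_def by blast
qed

lemma poly_upto_const: "finite I \<Longrightarrow> poly_upto I D (\<lambda>y. a)"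
  using poly_upto_sum_monomials[of I "{()}" "\<lambda>_. \<lambda>i\<in>I. 0" D "\<lambda>_. a"]
  by (simp add: exps_upto_def monomial_def)

lemma poly_upto_var:
  assumes "finite I" "v \<in> I"
  shows "poly_upto I 1 (\<lambda>y::'v \<Rightarrow> 'a::comm_semiring_1. y v)"
proof -
  have "monomial I (\<lambda>i\<in>I. if i = v then 1 else 0) y = y v" for y :: "'v \<Rightarrow> 'a"
  proof -
    have "monomial I (\<lambda>i\<in>I. if i = v then 1 else 0) y = (\<Prod>i\<in>I. if i = v then y i else 1)"
      unfolding monomial_def by (rule prod.cong) auto
    also have "\<dots> = y v" using assms by (simp add: prod.delta)
    finally show ?thesis .
  qed
  moreover have "poly_upto I 1 (\<lambda>y::'v \<Rightarrow> 'a. \<Sum>s\<in>{()}. 1 * monomial I (\<lambda>i\<in>I. if i = v then 1 else 0) y)"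
    by (rule poly_upto_sum_monomials) (use assms in \<open>auto simp: exps_upto_def\<close>)
  ultimately show ?thesis by simp
qed

lemma poly_upto_add:
  assumes "poly_upto I D f" "poly_upto I D g"
  shows "poly_upto I D (\<lambda>y. f y + g y)"
proof -
  obtain c1 c2 where c1: "\<forall>y. f y = (\<Sum>\<alpha>\<in>exps_upto I D. c1 \<alpha> * monomial I \<alpha> y)"
    and c2: "\<forall>y. g y = (\<Sum>\<alpha>\<in>exps_upto I D. c2 \<alpha> * monomial I \<alpha> y)"
    using assms unfolding poly_upto_def by (elim exE)
  have "f y + g y = (\<Sum>\<alpha>\<in>exps_upto I D. (c1 \<alpha> + c2 \<alpha>) * monomial I \<alpha> y)" for y
    unfolding c1[rule_format] c2[rule_format] by (simp only: sum.distrib distrib_right)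
  then show ?thesis unfolding poly_upto_def by (intro exI[of _ "\<lambda>\<alpha>. c1 \<alpha> + c2 \<alpha>"]) simp
qed

lemma poly_upto_mult:
  fixes f g :: "('v \<Rightarrow> 'a::comm_semiring_1) \<Rightarrow> 'a"
  assumes "finite I" "poly_upto I D1 f" "poly_upto I D2 g"
  shows "poly_upto I (D1 + D2) (\<lambda>y. f y * g y)"
proof -
  obtain c1 c2 where c1: "\<forall>y. f y = (\<Sum>\<alpha>\<in>exps_upto I D1. c1 \<alpha> * monomial I \<alpha> y)"
    and c2: "\<forall>y. g y = (\<Sum>\<beta>\<in>exps_upto I D2. c2 \<beta> * monomial I \<beta> y)"
    using assms(2,3) unfolding poly_upto_def by (elim exE)
  define h where "h = (\<lambda>(\<alpha>::'v \<Rightarrow> nat, \<beta>::'v \<Rightarrow> nat). restrict (\<lambda>i. \<alpha> i + \<beta> i) I)"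
  have hm: "monomial I (h p) y = monomial I (fst p) y * monomial I (snd p) y" for p y
    by (subst monomial_add[symmetric], rule monomial_cong) (auto simp: h_def split: prod.splits)
  then have "f y * g y = (\<Sum>p\<in>exps_upto I D1 \<times> exps_upto I D2.
      (c1 (fst p) * c2 (snd p)) * monomial I (h p) y)" for y
    unfolding c1[rule_format] c2[rule_format] sum_product sum.cartesian_product
    by (intro sum.cong) (simp_all add: hm mult_ac case_prod_beta)
  moreover have "poly_upto I (D1 + D2) (\<lambda>y. \<Sum>p\<in>exps_upto I D1 \<times> exps_upto I D2.
      (c1 (fst p) * c2 (snd p)) * monomial I (h p) y)"
    by (rule poly_upto_sum_monomials) (use assms(1) exps_upto_add in \<open>auto simp: h_def\<close>)
  ultimately show ?thesis by simp
qed

lemma poly_upto_power: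
  assumes "finite I" "poly_upto I e f"
  shows "poly_upto I (e * j) (\<lambda>y. f y ^ j)"
proof (induction j)
  case 0
  show ?case using poly_upto_const[OF assms(1)] by simp
next
  case (Suc j)
  have "poly_upto I (e + e * j) (\<lambda>y. f y * f y ^ j)"
    by (rule poly_upto_mult[OF assms Suc])
  then show ?case by simp
qed

lemma poly_upto_prod_power:
  assumes "finite I" "finite K" "\<And>k. k \<in> K \<Longrightarrow> poly_upto I e (f k)"
  shows "poly_upto I (\<Sum>k\<in>K. e * \<alpha> k) (\<lambda>y. \<Prod>k\<in>K. f k y ^ \<alpha> k)"
  using assms(2,3)
proof (induction K rule: finite_induct)
  case empty
  show ?case using poly_upto_const[OF assms(1)] by simp
next
  case (insert x F)
  have "poly_upto I (e * \<alpha> x + (\<Sum>k\<in>F. e * \<alpha> k)) (\<lambda>y. f x y ^ \<alpha> x * (\<Prod>k\<in>F. f k y ^ \<alpha> k))"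
    using insert by (intro poly_upto_mult[OF assms(1)] poly_upto_power[OF assms(1)]) auto
  then show ?case using insert.hyps by simp
qed

lemma poly_upto_local:
  assumes "poly_upto I D f" "\<And>i. i \<in> I \<Longrightarrow> y i = y' i"
  shows "f y = f y'"
proof -
  obtain c where "\<forall>y. f y = (\<Sum>\<alpha>\<in>exps_upto I D. c \<alpha> * monomial I \<alpha> y)"
    using assms(1) unfolding poly_upto_def by (elim exE)
  moreover have "monomial I \<alpha> y = monomial I \<alpha> y'" for \<alpha>
    by (rule monomial_local) (rule assms(2))
  ultimately show ?thesis by simp
qed

lemma poly_in_const: "finite I \<Longrightarrow> poly_in I (\<lambda>y. a)"
  unfolding poly_in_def by (rule exI, rule poly_upto_const)

lemma poly_in_var: "finite I \<Longrightarrow> v \<in> I \<Longrightarrow> poly_in I (\<lambda>y. y v)"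
  unfolding poly_in_def by (rule exI, rule poly_upto_var)

lemma poly_in_add:
  assumes "finite I" "poly_in I f" "poly_in I g"
  shows "poly_in I (\<lambda>y. f y + g y)"
proof -
  obtain D1 D2 where "poly_upto I D1 f" "poly_upto I D2 g"
    using assms unfolding poly_in_def by (elim exE)
  then have "poly_upto I (D1 + D2) f" "poly_upto I (D1 + D2) g"
    using poly_upto_mono[OF assms(1) le_add1] poly_upto_mono[OF assms(1) le_add2] by blast+
  then have "poly_upto I (D1 + D2) (\<lambda>y. f y + g y)" by (rule poly_upto_add)
  then show ?thesis unfolding poly_in_def ..
qed

lemma poly_in_mult:
  assumes "finite I" "poly_in I f" "poly_in I g"
  shows "poly_in I (\<lambda>y. f y * g y)"
proof -
  obtain D1 D2 where "poly_upto I D1 f" "poly_upto I D2 g"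
    using assms unfolding poly_in_def by (elim exE)
  then have "poly_upto I (D1 + D2) (\<lambda>y. f y * g y)" by (rule poly_upto_mult[OF assms(1)])
  then show ?thesis unfolding poly_in_def ..
qed

lemma poly_in_power:
  assumes "finite I" "poly_in I f"
  shows "poly_in I (\<lambda>y. f y ^ k)"
proof -
  obtain D where "poly_upto I D f"
    using assms unfolding poly_in_def by (elim exE)
  then have "poly_upto I (D * k) (\<lambda>y. f y ^ k)" by (rule poly_upto_power[OF assms(1)])
  then show ?thesis unfolding poly_in_def ..
qed

lemma poly_in_sum:
  assumes "finite I" "finite S" "\<And>s. s \<in> S \<Longrightarrow> poly_in I (f s)"
  shows "poly_in I (\<lambda>y. \<Sum>s\<in>S. f s y)"
  using assms(2,3)
proof (induction S rule: finite_induct)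
  case empty
  show ?case using poly_in_const[OF assms(1)] by simp
next
  case (insert x F)
  have "poly_in I (\<lambda>y. f x y + (\<Sum>s\<in>F. f s y))"
    using insert by (intro poly_in_add[OF assms(1)]) auto
  then show ?case using insert.hyps by simp
qed

lemma poly_in_prod:
  assumes "finite I" "finite S" "\<And>s. s \<in> S \<Longrightarrow> poly_in I (f s)"
  shows "poly_in I (\<lambda>y. \<Prod>s\<in>S. f s y)"
  using assms(2,3)
proof (induction S rule: finite_induct)
  case empty
  show ?case using poly_in_const[OF assms(1)] by simp
next
  case (insert x F)
  have "poly_in I (\<lambda>y. f x y * (\<Prod>s\<in>F. f s y))"
    using insert by (intro poly_in_mult[OF assms(1)]) auto
  then show ?case using insert.hyps by simp
qed

lemma poly_in_subst:
  assumes "finite I" "finite K" "poly_in K P" "\<And>\<kappa>. \<kappa> \<in> K \<Longrightarrow> poly_in I (f \<kappa>)"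
  shows "poly_in I (\<lambda>y. P (\<lambda>\<kappa>. f \<kappa> y))"
proof -
  obtain D c where c: "\<forall>z. P z = (\<Sum>\<alpha>\<in>exps_upto K D. c \<alpha> * monomial K \<alpha> z)"
    using assms(3) unfolding poly_in_def poly_upto_def by (elim exE)
  have "poly_in I (\<lambda>y. \<Sum>\<alpha>\<in>exps_upto K D. c \<alpha> * (\<Prod>\<kappa>\<in>K. f \<kappa> y ^ \<alpha> \<kappa>))"
    by (intro poly_in_sum poly_in_mult poly_in_const poly_in_prod poly_in_power assms(1,2,4)
        finite_exps_upto)
  then show ?thesis using c by (simp add: monomial_def)
qed

lemma sum_exps_upto_insert:
  assumes "finite K" "v \<notin> K"
  shows "(\<Sum>\<alpha>\<in>exps_upto (insert v K) D. c \<alpha> * monomial (insert v K) \<alpha> y)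
       = (\<Sum>j\<le>D. (\<Sum>\<alpha>\<in>exps_upto K D. c (\<alpha>(v := j)) * monomial K \<alpha> y) * y v ^ j)"
proof -
  have "(\<Sum>j\<le>D. (\<Sum>\<alpha>\<in>exps_upto K D. c (\<alpha>(v := j)) * monomial K \<alpha> y) * y v ^ j)
      = (\<Sum>\<alpha>\<in>exps_upto K D. \<Sum>j\<le>D. c (\<alpha>(v := j)) * monomial K \<alpha> y * y v ^ j)"
    unfolding sum_distrib_right by (rule sum.swap)
  also have "\<dots> = (\<Sum>(\<alpha>, j)\<in>exps_upto K D \<times> {..D}. c (\<alpha>(v := j)) * monomial K \<alpha> y * y v ^ j)"
    by (rule sum.cartesian_product)
  also have "\<dots> = (\<Sum>\<alpha>\<in>exps_upto (insert v K) D. c \<alpha> * monomial (insert v K) \<alpha> y)"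
  proof (rule sum.reindex_bij_witness[where j="\<lambda>(\<alpha>, j). \<alpha>(v := j)" and i="\<lambda>\<alpha>. (\<alpha>(v := undefined), \<alpha> v)"])
    fix p assume p: "p \<in> exps_upto K D \<times> {..D}"
    then have "fst p v = undefined"
      using assms(2) unfolding exps_upto_def by (auto simp: PiE_iff extensional_def)
    then show "(\<lambda>\<alpha>. (\<alpha>(v := undefined), \<alpha> v)) ((\<lambda>(\<alpha>, j). \<alpha>(v := j)) p) = p"
      by (cases p) auto
    show "(\<lambda>(\<alpha>, j). \<alpha>(v := j)) p \<in> exps_upto (insert v K) D"
      using p unfolding exps_upto_def by (auto simp: PiE_iff extensional_def)
    show "c ((\<lambda>(\<alpha>, j). \<alpha>(v := j)) p) * monomial (insert v K) ((\<lambda>(\<alpha>, j). \<alpha>(v := j)) p) y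
        = (case p of (\<alpha>, j) \<Rightarrow> c (\<alpha>(v := j)) * monomial K \<alpha> y * y v ^ j)"
      by (cases p) (simp add: monomial_insert[OF assms] mult.assoc)
  next
    fix \<alpha> assume \<alpha>: "\<alpha> \<in> exps_upto (insert v K) D"
    then show "(\<lambda>(\<alpha>, j). \<alpha>(v := j)) (\<alpha>(v := undefined), \<alpha> v) = \<alpha>" by auto
    show "(\<alpha>(v := undefined), \<alpha> v) \<in> exps_upto K D \<times> {..D}"
      using \<alpha> assms(2) unfolding exps_upto_def by (auto simp: PiE_iff extensional_def)
  qed
  finally show ?thesis by simp
qed

lemma poly_upto_insert_var:
  assumes "finite K" "v \<notin> K" "poly_upto (insert v K) D P"
  shows "\<exists>C. (\<forall>j. poly_upto K D (C j)) \<and> (\<forall>y. P y = (\<Sum>j\<le>D. C j y * y v ^ j))"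
proof -
  obtain c where c: "\<forall>y. P y = (\<Sum>\<alpha>\<in>exps_upto (insert v K) D. c \<alpha> * monomial (insert v K) \<alpha> y)"
    using assms(3) unfolding poly_upto_def by (elim exE)
  define C where "C j y = (\<Sum>\<alpha>\<in>exps_upto K D. c (\<alpha>(v := j)) * monomial K \<alpha> y)" for j y
  have "poly_upto K D (C j)" for j
    unfolding poly_upto_def C_def by (rule exI[of _ "\<lambda>\<alpha>. c (\<alpha>(v := j))"]) simp
  moreover have "P y = (\<Sum>j\<le>D. C j y * y v ^ j)" for y
    using c sum_exps_upto_insert[OF assms(1,2)] by (simp add: C_def)
  ultimately show ?thesis by blast
qed

lemma univariate_coeffs_eq_0:
  fixes a :: "nat \<Rightarrow> 'a::{idom, ring_char_0}"
  assumes "\<forall>z. (\<Sum>j\<le>D. a j * z ^ j) = 0" "j \<le> D"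
  shows "a j = 0"
proof -
  define p where "p = (\<Sum>j\<le>D. monom (a j) j)"
  have "poly p z = 0" for z using assms(1) by (simp add: p_def poly_sum poly_monom)
  then have "p = 0" using poly_all_0_iff_0 by blast
  then have "coeff p j = 0" by simp
  moreover have "coeff p j = a j"
    unfolding p_def coeff_sum coeff_monom using assms(2) by (simp add: sum.delta)
  ultimately show ?thesis by simp
qed

lemma monomials_linear_independent:
  fixes c :: "('v \<Rightarrow> nat) \<Rightarrow> 'a::{idom, ring_char_0}"
  assumes "finite K" "\<forall>y. (\<Sum>\<alpha>\<in>exps_upto K D. c \<alpha> * monomial K \<alpha> y) = 0" "\<alpha> \<in> exps_upto K D"
  shows "c \<alpha> = 0"
  using assms
proof (induction K arbitrary: c \<alpha> rule: finite_induct)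
  case empty
  then show ?case by (simp add: exps_upto_def monomial_def)
next
  case (insert v K)
  define C where "C j y = (\<Sum>\<alpha>\<in>exps_upto K D. c (\<alpha>(v := j)) * monomial K \<alpha> y)" for j y
  have monomial_upd: "monomial K \<alpha> (y(v := z)) = monomial K \<alpha> y" for \<alpha> y z
    by (rule monomial_local) (use insert.hyps(2) in auto)
  have C_local: "C j (y(v := z)) = C j y" for j y z
    unfolding C_def monomial_upd ..
  have C_0: "C j y = 0" if "j \<le> D" for j y
  proof (rule univariate_coeffs_eq_0[OF _ that], intro allI)
    fix z
    have "(\<Sum>j\<le>D. C j (y(v := z)) * (y(v := z)) v ^ j) = 0"
      unfolding C_def sum_exps_upto_insert[OF insert.hyps(1,2), symmetric] using insert.prems(1) by blast
    then show "(\<Sum>j\<le>D. C j y * z ^ j) = 0" by (simp add: C_local)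
  qed
  have \<alpha>_v: "\<alpha> v \<le> D" and \<alpha>_K: "\<alpha>(v := undefined) \<in> exps_upto K D"
    using insert.prems(2) insert.hyps(2) unfolding exps_upto_def by (auto simp: PiE_iff extensional_def)
  have "\<forall>y. (\<Sum>\<beta>\<in>exps_upto K D. c (\<beta>(v := \<alpha> v)) * monomial K \<beta> y) = 0"
    using C_0[OF \<alpha>_v] by (simp add: C_def)
  from insert.IH[OF this \<alpha>_K] show ?case by (metis fun_upd_triv fun_upd_upd)
qed

lemma poly_upto_on_line:
  assumes "poly_upto I D f"
  shows "\<exists>p. \<forall>t. f (\<lambda>i. a i + t * b i) = poly p t"
proof -
  obtain c where c: "\<forall>y. f y = (\<Sum>\<alpha>\<in>exps_upto I D. c \<alpha> * monomial I \<alpha> y)"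
    using assms unfolding poly_upto_def by (elim exE)
  define p where "p = (\<Sum>\<alpha>\<in>exps_upto I D. Polynomial.smult (c \<alpha>) (\<Prod>i\<in>I. [:a i, b i:] ^ \<alpha> i))"
  have "f (\<lambda>i. a i + t * b i) = poly p t" for t
    unfolding c[rule_format] p_def by (simp add: poly_sum poly_prod monomial_def algebra_simps)
  then show ?thesis by blast
qed

text \<open>On the line through the two witnesses both functions are non-zero polynomials in one
  variable, so their product has a non-root.\<close>
lemma poly_in_common_nonzero:
  fixes f g :: "('v \<Rightarrow> 'a::{idom, ring_char_0}) \<Rightarrow> 'a"
  assumes "poly_in I f" "poly_in I g" "f y1 \<noteq> 0" "g y2 \<noteq> 0"
  shows "\<exists>y. f y \<noteq> 0 \<and> g y \<noteq> 0"
proof -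
  define L where "L t = (\<lambda>i. y1 i + t * (y2 i - y1 i))" for t
  obtain D1 D2 where "poly_upto I D1 f" "poly_upto I D2 g"
    using assms(1,2) unfolding poly_in_def by (elim exE)
  then obtain p q where p: "\<forall>t. f (L t) = poly p t" and q: "\<forall>t. g (L t) = poly q t"
    unfolding L_def by (elim poly_upto_on_line[THEN exE])
  have "L 0 = y1" "L 1 = y2" by (auto simp: L_def)
  then have "p \<noteq> 0" "q \<noteq> 0" using p q assms(3,4) by (metis poly_0)+
  then obtain t where "poly (p * q) t \<noteq> 0" using poly_all_0_iff_0 by (metis no_zero_divisors)
  then have "f (L t) \<noteq> 0 \<and> g (L t) \<noteq> 0" using p q by simp
  then show ?thesis by blast
qed

lemma exps_upto_card_gap:
  assumes "finite I" "finite K" "card I < card K"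
  obtains D where "card (exps_upto I (e * card K * D)) < card (exps_upto K D)"
proof
  define d k where "d = card I" and "k = card K"
  define D where "D = (e * k + 1) ^ d"
  have "(e * k * D + 1) ^ d \<le> ((e * k + 1) * (D + 1)) ^ d"
    by (rule power_mono) (simp_all add: algebra_simps)
  also have "\<dots> = D * (D + 1) ^ d" unfolding D_def by (rule power_mult_distrib)
  also have "\<dots> < (D + 1) ^ Suc d" by simp
  also have "\<dots> \<le> (D + 1) ^ k" by (rule power_increasing) (use assms(3) in \<open>auto simp: d_def k_def\<close>)
  finally show "card (exps_upto I (e * card K * D)) < card (exps_upto K D)"
    by (simp add: card_exps_upto assms(1,2) d_def k_def)
qed

lemma poly_in_common_degree:
  assumes "finite I" "finite K" "\<And>\<kappa>. \<kappa> \<in> K \<Longrightarrow> poly_in I (f \<kappa>)"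
  shows "\<exists>e. \<forall>\<kappa>\<in>K. poly_upto I e (f \<kappa>)"
proof -
  obtain deg where deg: "\<forall>\<kappa>\<in>K. poly_upto I (deg \<kappa>) (f \<kappa>)"
    using bchoice[of K "\<lambda>\<kappa> D. poly_upto I D (f \<kappa>)"] assms(3) unfolding poly_in_def by blast
  have "poly_upto I (\<Sum>\<kappa>\<in>K. deg \<kappa>) (f \<kappa>)" if "\<kappa> \<in> K" for \<kappa>
    using poly_upto_mono[OF assms(1) member_le_sum[OF that _ assms(2)]] deg that by blast
  then show ?thesis by blast
qed

lemma poly_upto_monomial_comp:
  assumes I: "finite I" and K: "finite K" and f: "\<And>\<kappa>. \<kappa> \<in> K \<Longrightarrow> poly_upto I e (f \<kappa>)"
    and \<alpha>: "\<alpha> \<in> exps_upto K D"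
  shows "poly_upto I (e * card K * D) (\<lambda>y. monomial K \<alpha> (\<lambda>\<kappa>. f \<kappa> y))"
proof -
  have "(\<Sum>\<kappa>\<in>K. e * \<alpha> \<kappa>) \<le> (\<Sum>\<kappa>\<in>K. e * D)"
    using \<alpha> unfolding exps_upto_def by (intro sum_mono) (auto simp: PiE_iff)
  then have "(\<Sum>\<kappa>\<in>K. e * \<alpha> \<kappa>) \<le> e * card K * D" by (simp add: mult_ac)
  moreover have "poly_upto I (\<Sum>\<kappa>\<in>K. e * \<alpha> \<kappa>) (\<lambda>y. \<Prod>\<kappa>\<in>K. f \<kappa> y ^ \<alpha> \<kappa>)"
    by (rule poly_upto_prod_power[OF I K f])
  ultimately show ?thesis
    unfolding monomial_def by (rule poly_upto_mono[OF I])
qed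

text \<open>Relations of partial degree at most \<open>D\<close> among the \<open>card K\<close> functions form a space of
  dimension \<open>(D + 1)^card K\<close>, mapped linearly into the polynomials in \<open>I\<close> of partial degree
  \<open>O(D)\<close>, a space of dimension \<open>O(D^card I)\<close>; the map has a non-trivial kernel.\<close>
lemma polys_algebraically_dependent:
  fixes f :: "'k \<Rightarrow> ('v \<Rightarrow> 'a::field_char_0) \<Rightarrow> 'a"
  assumes I: "finite I" and K: "finite K" and card: "card I < card K"
    and f: "\<And>\<kappa>. \<kappa> \<in> K \<Longrightarrow> poly_in I (f \<kappa>)"
  shows "\<exists>D P. poly_upto K D P \<and> (\<exists>z. P z \<noteq> 0) \<and> (\<forall>y. P (\<lambda>\<kappa>. f \<kappa> y) = 0)"
proof -
  obtain e where f_e: "\<forall>\<kappa>\<in>K. poly_upto I e (f \<kappa>)"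
    using poly_in_common_degree[OF I K] f by blast
  obtain D where D: "card (exps_upto I (e * card K * D)) < card (exps_upto K D)"
    using exps_upto_card_gap[OF I K card] by blast
  define E where "E = e * card K * D"
  obtain M where M: "\<forall>\<alpha>\<in>exps_upto K D. \<forall>y.
      monomial K \<alpha> (\<lambda>\<kappa>. f \<kappa> y) = (\<Sum>\<beta>\<in>exps_upto I E. M \<alpha> \<beta> * monomial I \<beta> y)"
    using bchoice[of "exps_upto K D" "\<lambda>\<alpha> c. \<forall>y. monomial K \<alpha> (\<lambda>\<kappa>. f \<kappa> y)
      = (\<Sum>\<beta>\<in>exps_upto I E. c \<beta> * monomial I \<beta> y)"] poly_upto_monomial_comp[OF I K] f_e
    unfolding poly_upto_def E_def by blast
  obtain c where c: "\<exists>\<alpha>\<in>exps_upto K D. c \<alpha> \<noteq> 0"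
    and c_sol: "\<forall>\<beta>\<in>exps_upto I E. (\<Sum>\<alpha>\<in>exps_upto K D. M \<alpha> \<beta> * c \<alpha>) = 0"
    using homogeneous_system_nontrivial_solution[OF _ _ D[folded E_def], of "\<lambda>\<beta> \<alpha>. M \<alpha> \<beta>"] I K
    by auto
  define P where "P z = (\<Sum>\<alpha>\<in>exps_upto K D. c \<alpha> * monomial K \<alpha> z)" for z
  have "poly_upto K D P" unfolding poly_upto_def P_def by blast
  moreover have "\<exists>z. P z \<noteq> 0"
    using monomials_linear_independent[OF K, of c] c unfolding P_def by blast
  moreover have "P (\<lambda>\<kappa>. f \<kappa> y) = 0" for y
  proof -
    have "P (\<lambda>\<kappa>. f \<kappa> y) = (\<Sum>\<alpha>\<in>exps_upto K D. c \<alpha> * (\<Sum>\<beta>\<in>exps_upto I E. M \<alpha> \<beta> * monomial I \<beta> y))"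
      unfolding P_def using M by (intro sum.cong) auto
    also have "\<dots> = (\<Sum>\<beta>\<in>exps_upto I E. (\<Sum>\<alpha>\<in>exps_upto K D. M \<alpha> \<beta> * c \<alpha>) * monomial I \<beta> y)"
      by (simp add: sum_distrib_left sum_distrib_right mult_ac sum.swap[of _ "exps_upto K D"])
    also have "\<dots> = 0" using c_sol by simp
    finally show ?thesis .
  qed
  ultimately show ?thesis by blast
qed

lemma sum_powers_factor_lowest:
  fixes c :: "nat \<Rightarrow> 'a::comm_semiring_1"
  assumes "\<And>j. j < j0 \<Longrightarrow> c j = 0" "j0 \<le> D"
  shows "(\<Sum>j\<le>D. c j * t ^ j) = t ^ j0 * (\<Sum>j\<in>{j0..D}. c j * t ^ (j - j0))"
proof -
  have "(\<Sum>j\<le>D. c j * t ^ j) = (\<Sum>j\<in>{..<j0} \<union> {j0..D}. c j * t ^ j)"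
    using assms(2) by (intro sum.cong) auto
  also have "\<dots> = (\<Sum>j\<in>{j0..D}. c j * t ^ j)"
    using assms(1) by (subst sum.union_disjoint) auto
  also have "\<dots> = (\<Sum>j\<in>{j0..D}. t ^ j0 * (c j * t ^ (j - j0)))"
    by (intro sum.cong) (auto simp: power_add[symmetric] mult_ac)
  finally show ?thesis by (simp add: sum_distrib_left)
qed

lemma poly_upto_factor_lowest_power:
  assumes P: "poly_upto {..<Suc k} D P" and "P z \<noteq> 0"
  shows "\<exists>C j0. (\<forall>j. poly_upto {..<k} D (C j)) \<and> j0 \<le> D \<and> (\<exists>y. C j0 y \<noteq> 0) \<and>
    (\<forall>y. P y = y k ^ j0 * (\<Sum>j\<in>{j0..D}. C j y * y k ^ (j - j0)))"
proof -
  have P': "poly_upto (insert k {..<k}) D P" and k: "k \<notin> {..<k}"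
    using P by (simp_all add: lessThan_Suc)
  obtain C where C: "\<And>j. poly_upto {..<k} D (C j)" and P_C: "\<And>y. P y = (\<Sum>j\<le>D. C j y * y k ^ j)"
    using poly_upto_insert_var[OF finite_lessThan k P'] by blast
  have "\<exists>j. j \<le> D \<and> (\<exists>y. C j y \<noteq> 0)"
  proof (rule ccontr)
    assume "\<not> ?thesis"
    then have "P z = 0" using P_C[of z] by simp
    then show False using \<open>P z \<noteq> 0\<close> by simp
  qed
  then obtain j0 where j0: "j0 \<le> D" "\<exists>y. C j0 y \<noteq> 0"
    and below: "\<forall>j<j0. \<not> (j \<le> D \<and> (\<exists>y. C j y \<noteq> 0))"
    unfolding exists_least_iff[of "\<lambda>j. j \<le> D \<and> (\<exists>y. C j y \<noteq> 0)"] by blast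
  have "P y = y k ^ j0 * (\<Sum>j\<in>{j0..D}. C j y * y k ^ (j - j0))" for y
    unfolding P_C using below j0(1) by (intro sum_powers_factor_lowest) auto
  then show ?thesis using C j0 by blast
qed

section \<open>Algebraic independence\<close>

definition alg_indep_on :: "'x set \<Rightarrow> nat \<Rightarrow> (nat \<Rightarrow> 'x \<Rightarrow> 'a::comm_semiring_1) \<Rightarrow> bool" where
  "alg_indep_on S k g \<longleftrightarrow>
     (\<forall>D P. poly_upto {..<k} D P \<longrightarrow> (\<forall>A\<in>S. P (\<lambda>i. g i A) = 0) \<longrightarrow> (\<forall>z. P z = 0))"

lemma alg_indep_on_empty_family:
  fixes g :: "nat \<Rightarrow> 'x \<Rightarrow> 'a::comm_semiring_1"
  assumes "S \<noteq> {}"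
  shows "alg_indep_on S 0 g"
  unfolding alg_indep_on_def
proof (intro allI impI)
  fix P :: "(nat \<Rightarrow> 'a) \<Rightarrow> 'a" and D z
  assume P: "poly_upto {..<0} D P" and vanish: "\<forall>A\<in>S. P (\<lambda>i. g i A) = 0"
  obtain A where "A \<in> S" using assms by blast
  moreover have "P z = P (\<lambda>i. g i A)" by (rule poly_upto_local[OF P]) simp
  ultimately show "P z = 0" using vanish by simp
qed

lemma alg_indep_on_mono: "alg_indep_on S k g \<Longrightarrow> S \<subseteq> T \<Longrightarrow> alg_indep_on T k g"
  unfolding alg_indep_on_def by blast

lemma not_alg_indep_onI:
  assumes "poly_upto {..<k} D P" "\<And>A. A \<in> S \<Longrightarrow> P (\<lambda>i. g i A) = 0" "P z \<noteq> 0"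
  shows "\<not> alg_indep_on S k g"
  using assms unfolding alg_indep_on_def by blast

lemma not_alg_indep_on_Un:
  fixes g :: "nat \<Rightarrow> 'x \<Rightarrow> 'a::{idom, ring_char_0}"
  assumes "\<not> alg_indep_on S1 k g" "\<not> alg_indep_on S2 k g"
  shows "\<not> alg_indep_on (S1 \<union> S2) k g"
proof -
  obtain D1 P1 z1 where P1: "poly_upto {..<k} D1 P1" "\<forall>A\<in>S1. P1 (\<lambda>i. g i A) = 0" "P1 z1 \<noteq> 0"
    using assms(1) unfolding alg_indep_on_def by blast
  obtain D2 P2 z2 where P2: "poly_upto {..<k} D2 P2" "\<forall>A\<in>S2. P2 (\<lambda>i. g i A) = 0" "P2 z2 \<noteq> 0"
    using assms(2) unfolding alg_indep_on_def by blast
  have "poly_in {..<k} P1" "poly_in {..<k} P2"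
    using P1(1) P2(1) unfolding poly_in_def by blast+
  then obtain z where z: "P1 z \<noteq> 0" "P2 z \<noteq> 0"
    using poly_in_common_nonzero P1(3) P2(3) by blast
  have "poly_upto {..<k} (D1 + D2) (\<lambda>y. P1 y * P2 y)"
    by (rule poly_upto_mult[OF _ P1(1) P2(1)]) simp
  moreover have "P1 (\<lambda>i. g i A) * P2 (\<lambda>i. g i A) = 0" if "A \<in> S1 \<union> S2" for A
    using P1(2) P2(2) that by auto
  moreover have "P1 z * P2 z \<noteq> 0" using z by simp
  ultimately show ?thesis by (rule not_alg_indep_onI)
qed

section \<open>Zariski topology and transcendence degree\<close>

lemma poly_fun_sum:
  "finite S \<Longrightarrow> (\<And>s. s \<in> S \<Longrightarrow> f s \<in> poly_fun m n) \<Longrightarrow> (\<lambda>A. \<Sum>s\<in>S. f s A) \<in> poly_fun m n"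
  by (induction S rule: finite_induct) (auto intro: poly_fun.intros)

lemma poly_fun_prod:
  "finite S \<Longrightarrow> (\<And>s. s \<in> S \<Longrightarrow> f s \<in> poly_fun m n) \<Longrightarrow> (\<lambda>A. \<Prod>s\<in>S. f s A) \<in> poly_fun m n"
  by (induction S rule: finite_induct) (auto intro: poly_fun.intros)

lemma poly_fun_power: "f \<in> poly_fun m n \<Longrightarrow> (\<lambda>A. f A ^ j) \<in> poly_fun m n"
  by (induction j) (auto intro: poly_fun.intros)

lemma poly_fun_subst:
  assumes "finite K" "poly_in K P" "\<And>\<kappa>. \<kappa> \<in> K \<Longrightarrow> g \<kappa> \<in> poly_fun m n"
  shows "(\<lambda>A. P (\<lambda>\<kappa>. g \<kappa> A)) \<in> poly_fun m n"
proof -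
  obtain D c where c: "\<forall>z. P z = (\<Sum>\<alpha>\<in>exps_upto K D. c \<alpha> * monomial K \<alpha> z)"
    using assms(2) unfolding poly_in_def poly_upto_def by (elim exE)
  have "(\<lambda>A. \<Sum>\<alpha>\<in>exps_upto K D. c \<alpha> * (\<Prod>\<kappa>\<in>K. g \<kappa> A ^ \<alpha> \<kappa>)) \<in> poly_fun m n"
    by (intro poly_fun_sum poly_fun_prod poly_fun.pf_mult poly_fun.pf_const poly_fun_power
        assms(1,3) finite_exps_upto)
  then show ?thesis using c by (simp add: monomial_def)
qed

lemma poly_in_comp_poly_fun:
  assumes "g \<in> poly_fun m n" "finite I" "\<And>i j. i < m \<Longrightarrow> j < n \<Longrightarrow> poly_in I (\<lambda>y. \<phi> y $$ (i, j))"
  shows "poly_in I (\<lambda>y. g (\<phi> y))"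
  using assms(1)
proof (induction rule: poly_fun.induct)
  case (pf_const c)
  show ?case by (rule poly_in_const[OF assms(2)])
next
  case (pf_var i j)
  then show ?case by (rule assms(3))
next
  case (pf_add f g)
  show ?case by (rule poly_in_add[OF assms(2) pf_add.IH])
next
  case (pf_mult f g)
  show ?case by (rule poly_in_mult[OF assms(2) pf_mult.IH])
qed

lemma zariski_closed_subset_carrier: "zariski_closed m n Z \<Longrightarrow> Z \<subseteq> carrier_mat m n"
  unfolding zariski_closed_def by auto

lemma zariski_closed_carrier: "zariski_closed m n (carrier_mat m n)"
  unfolding zariski_closed_def by (rule exI[of _ "{}"]) auto

lemma zariski_closed_zero_set:
  assumes "zariski_closed m n Z" "f \<in> poly_fun m n"
  shows "zariski_closed m n {A \<in> Z. f A = 0}"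
proof -
  obtain F where F: "F \<subseteq> poly_fun m n" "Z = {A \<in> carrier_mat m n. \<forall>f\<in>F. f A = 0}"
    using assms(1) unfolding zariski_closed_def by blast
  then have "insert f F \<subseteq> poly_fun m n"
    and "{A \<in> Z. f A = 0} = {A \<in> carrier_mat m n. \<forall>f\<in>insert f F. f A = 0}"
    using assms(2) by auto
  then show ?thesis unfolding zariski_closed_def by blast
qed

lemma zariski_closed_Inter:
  assumes "\<Z> \<noteq> {}" "\<And>Z. Z \<in> \<Z> \<Longrightarrow> zariski_closed m n Z"
  shows "zariski_closed m n (\<Inter>\<Z>)"
proof -
  obtain F where F: "\<forall>Z\<in>\<Z>. F Z \<subseteq> poly_fun m n \<and> Z = {A \<in> carrier_mat m n. \<forall>f\<in>F Z. f A = 0}"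
    using bchoice[of \<Z> "\<lambda>Z F. F \<subseteq> poly_fun m n \<and> Z = {A \<in> carrier_mat m n. \<forall>f\<in>F. f A = 0}"]
      assms(2) unfolding zariski_closed_def by blast
  have "\<Inter>\<Z> = {A \<in> carrier_mat m n. \<forall>f\<in>(\<Union>Z\<in>\<Z>. F Z). f A = 0}"
    using assms(1) F by blast
  moreover have "(\<Union>Z\<in>\<Z>. F Z) \<subseteq> poly_fun m n" using F by blast
  ultimately show ?thesis unfolding zariski_closed_def by blast
qed

lemma zariski_closure_least: "zariski_closed m n Z \<Longrightarrow> S \<subseteq> Z \<Longrightarrow> zariski_closure m n S \<subseteq> Z"
  unfolding zariski_closure_def by blast

lemma zariski_closure_superset: "S \<subseteq> zariski_closure m n S"
  unfolding zariski_closure_def by blast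

lemma zariski_closure_mono: "S \<subseteq> T \<Longrightarrow> zariski_closure m n S \<subseteq> zariski_closure m n T"
  unfolding zariski_closure_def by blast

lemma zariski_closed_closure:
  "S \<subseteq> carrier_mat m n \<Longrightarrow> zariski_closed m n (zariski_closure m n S)"
  unfolding zariski_closure_def by (rule zariski_closed_Inter) (use zariski_closed_carrier in auto)

lemma zariski_closed_psubset_separating:
  assumes "zariski_closed m n Z" "zariski_closed m n W" "Z \<subset> W"
  shows "\<exists>a\<in>poly_fun m n. (\<forall>A\<in>Z. a A = 0) \<and> (\<exists>A0\<in>W. a A0 \<noteq> 0)"
proof -
  obtain A0 where "A0 \<in> W" "A0 \<notin> Z" using assms(3) by blast
  moreover have "A0 \<in> carrier_mat m n"
    using \<open>A0 \<in> W\<close> zariski_closed_subset_carrier[OF assms(2)] by blast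
  ultimately show ?thesis using assms(1) unfolding zariski_closed_def by blast
qed

lemma zariski_irreducible_closed: "zariski_irreducible m n W \<Longrightarrow> zariski_closed m n W"
  by (simp add: zariski_irreducible_def)

lemma irreducible_vanishing_product:
  assumes W: "zariski_irreducible m n W" and fg: "f \<in> poly_fun m n" "g \<in> poly_fun m n"
    and prod: "\<And>A. A \<in> W \<Longrightarrow> f A * g A = 0" and f_ne: "A0 \<in> W" "f A0 \<noteq> 0"
  shows "\<forall>A\<in>W. g A = 0"
proof -
  have closed: "zariski_closed m n W" using W by (rule zariski_irreducible_closed)
  have "W = {A \<in> W. f A = 0} \<union> {A \<in> W. g A = 0}" using prod by auto
  moreover have "W \<noteq> {A \<in> W. f A = 0}" using f_ne by blast
  ultimately have "W = {A \<in> W. g A = 0}"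
    using W zariski_closed_zero_set[OF closed] fg unfolding zariski_irreducible_def by blast
  then show ?thesis by blast
qed

text \<open>The coordinate ring of \<open>S\<close>, i.e.\ the restrictions of \<open>poly_fun m n\<close> to \<open>S\<close>, has
  transcendence degree at most \<open>d\<close>.\<close>
definition trdeg_le :: "nat \<Rightarrow> nat \<Rightarrow> complex mat set \<Rightarrow> nat \<Rightarrow> bool" where
  "trdeg_le m n S d \<longleftrightarrow> (\<forall>k g. d < k \<longrightarrow> (\<forall>i<k. g i \<in> poly_fun m n) \<longrightarrow> \<not> alg_indep_on S k g)"

text \<open>A strictly larger irreducible set supports one more algebraically independent function:
  a polynomial \<open>a\<close> vanishing on \<open>Z\<close> but not on \<open>W\<close>. Were \<open>P(g, a) = 0\<close> on \<open>W\<close>, factor out the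
  lowest power of \<open>a\<close>; irreducibility of \<open>W\<close> removes it, and restricting the cofactor to \<open>Z\<close>
  leaves a non-trivial relation among the \<open>g\<close> on \<open>Z\<close>.\<close>
lemma alg_indep_on_extend:
  assumes W: "zariski_irreducible m n W" and Z: "zariski_closed m n Z" "Z \<subset> W"
    and indep: "alg_indep_on Z k g" and g: "\<forall>i<k. g i \<in> poly_fun m n"
  shows "\<exists>a\<in>poly_fun m n. alg_indep_on W (Suc k) (g(k := a))"
proof -
  obtain a A0 where a: "a \<in> poly_fun m n" "\<And>A. A \<in> Z \<Longrightarrow> a A = 0" and A0: "A0 \<in> W" "a A0 \<noteq> 0"
    using zariski_closed_psubset_separating[OF Z(1) zariski_irreducible_closed[OF W] Z(2)] by blast
  have "alg_indep_on W (Suc k) (g(k := a))"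
    unfolding alg_indep_on_def
  proof (intro allI impI; rule ccontr)
    fix P :: "(nat \<Rightarrow> complex) \<Rightarrow> complex" and D z
    assume P: "poly_upto {..<Suc k} D P" and P_W: "\<forall>A\<in>W. P (\<lambda>i. (g(k := a)) i A) = 0"
      and "P z \<noteq> 0"
    obtain C j0 where C: "\<And>j. poly_upto {..<k} D (C j)" and j0: "j0 \<le> D" "\<exists>y. C j0 y \<noteq> 0"
      and P_C: "\<And>y. P y = y k ^ j0 * (\<Sum>j\<in>{j0..D}. C j y * y k ^ (j - j0))"
      using poly_upto_factor_lowest_power[OF P \<open>P z \<noteq> 0\<close>] by blast
    define R where "R A = (\<Sum>j\<in>{j0..D}. C j (\<lambda>i. g i A) * a A ^ (j - j0))" for A
    have "(\<lambda>A. C j (\<lambda>i. g i A)) \<in> poly_fun m n" for j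
      by (rule poly_fun_subst[of "{..<k}"]) (use C g in \<open>auto simp: poly_in_def\<close>)
    then have R: "R \<in> poly_fun m n"
      unfolding R_def by (intro poly_fun_sum poly_fun.pf_mult poly_fun_power a(1)) auto
    have factor: "a A ^ j0 * R A = 0" if "A \<in> W" for A
    proof -
      have "C j (\<lambda>i. (if i = k then a else g i) A) = C j (\<lambda>i. g i A)" for j
        by (rule poly_upto_local[OF C]) simp
      moreover have "P (\<lambda>i. (g(k := a)) i A) = 0" using P_W that by blast
      ultimately show ?thesis by (simp add: P_C R_def)
    qed
    have R_W: "\<forall>A\<in>W. R A = 0"
    proof (rule irreducible_vanishing_product[OF W _ R])
      show "(\<lambda>A. a A ^ j0) \<in> poly_fun m n" by (rule poly_fun_power[OF a(1)])
      show "a A ^ j0 * R A = 0" if "A \<in> W" for A using factor that .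
      show "a A0 ^ j0 \<noteq> 0" using A0(2) by simp
    qed (rule A0(1))
    have "C j0 (\<lambda>i. g i A) = 0" if "A \<in> Z" for A
    proof -
      have "R A = (\<Sum>j\<in>insert j0 {Suc j0..D}. C j (\<lambda>i. g i A) * a A ^ (j - j0))"
        unfolding R_def using j0(1) by (intro sum.cong) auto
      also have "\<dots> = C j0 (\<lambda>i. g i A)" using a(2)[OF that] by (simp add: zero_power)
      finally show ?thesis using R_W that Z(2) by auto
    qed
    then have "\<forall>y. C j0 y = 0"
      using indep C[of j0] unfolding alg_indep_on_def by blast
    then show False using j0(2) by blast
  qed
  then show ?thesis using a(1) by blast
qed

lemma zdim_le_of_trdeg_le:
  assumes "trdeg_le m n V d"
  shows "zdim m n V \<le> enat d"
  unfolding zdim_def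
proof (rule Sup_least)
  fix x assume "x \<in> {enat k |k. \<exists>Z. (\<forall>i\<le>k. zariski_irreducible m n (Z i) \<and> Z i \<subseteq> V) \<and>
    (\<forall>i<k. Z i \<subset> Z (Suc i))}"
  then obtain k Z where x: "x = enat k" and Z: "\<forall>i\<le>k. zariski_irreducible m n (Z i) \<and> Z i \<subseteq> V"
    "\<forall>i<k. Z i \<subset> Z (Suc i)" by blast
  have "\<exists>g. (\<forall>i<j. g i \<in> poly_fun m n) \<and> alg_indep_on (Z j) j g" if "j \<le> k" for j
    using that
  proof (induction j)
    case 0
    have "zariski_irreducible m n (Z 0)" using Z(1) by blast
    then have "Z 0 \<noteq> {}" by (simp add: zariski_irreducible_def)
    then have "alg_indep_on (Z 0) 0 (\<lambda>_ _. 0 :: complex)" by (rule alg_indep_on_empty_family)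
    then show ?case by blast
  next
    case (Suc j)
    have "j \<le> k" using Suc.prems by simp
    then obtain g where g: "\<forall>i<j. g i \<in> poly_fun m n" "alg_indep_on (Z j) j g"
      using Suc.IH by blast
    have irr: "zariski_irreducible m n (Z (Suc j))" "zariski_irreducible m n (Z j)"
      using Z(1) Suc.prems by simp_all
    have sub: "Z j \<subset> Z (Suc j)" using Z(2) Suc.prems by simp
    obtain a where a: "a \<in> poly_fun m n" "alg_indep_on (Z (Suc j)) (Suc j) (g(j := a))"
      using alg_indep_on_extend[OF irr(1) zariski_irreducible_closed[OF irr(2)] sub g(2,1)] by blast
    have "\<forall>i<Suc j. (g(j := a)) i \<in> poly_fun m n" using g(1) a(1) by auto
    then show ?case using a(2) by (intro exI[of _ "g(j := a)"]) blast
  qed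
  then obtain g where g: "\<forall>i<k. g i \<in> poly_fun m n" "alg_indep_on (Z k) k g" by blast
  then have "alg_indep_on V k g" using alg_indep_on_mono Z(1) by blast
  then have "\<not> d < k" using assms g(1) unfolding trdeg_le_def by blast
  then show "x \<le> enat d" using x by simp
qed

lemma trdeg_le_subset: "trdeg_le m n S d \<Longrightarrow> T \<subseteq> S \<Longrightarrow> trdeg_le m n T d"
  unfolding trdeg_le_def using alg_indep_on_mono by blast

lemma trdeg_le_empty: "trdeg_le m n {} d"
  unfolding trdeg_le_def
proof (intro allI impI)
  fix k :: nat and g :: "nat \<Rightarrow> complex mat \<Rightarrow> complex"
  show "\<not> alg_indep_on {} k g"
    by (rule not_alg_indep_onI[of k 0 "\<lambda>_. 1"]) (simp_all add: poly_upto_const)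
qed

lemma trdeg_le_zariski_closure:
  assumes "S \<subseteq> carrier_mat m n" "trdeg_le m n S d"
  shows "trdeg_le m n (zariski_closure m n S) d"
  unfolding trdeg_le_def
proof (intro allI impI)
  fix k g assume "d < k" and g: "\<forall>i<k. g i \<in> poly_fun m n"
  then have "\<not> alg_indep_on S k g" using assms(2) unfolding trdeg_le_def by blast
  then obtain D P z where P: "poly_upto {..<k} D P" "\<forall>A\<in>S. P (\<lambda>i. g i A) = 0" "P z \<noteq> 0"
    unfolding alg_indep_on_def by blast
  have "(\<lambda>A. P (\<lambda>i. g i A)) \<in> poly_fun m n"
    by (rule poly_fun_subst[of "{..<k}"]) (use P(1) g in \<open>auto simp: poly_in_def\<close>)
  then have "zariski_closed m n {A \<in> carrier_mat m n. P (\<lambda>i. g i A) = 0}"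
    by (rule zariski_closed_zero_set[OF zariski_closed_carrier])
  moreover have "S \<subseteq> {A \<in> carrier_mat m n. P (\<lambda>i. g i A) = 0}" using assms(1) P(2) by auto
  ultimately have "zariski_closure m n S \<subseteq> {A \<in> carrier_mat m n. P (\<lambda>i. g i A) = 0}"
    by (rule zariski_closure_least)
  then show "\<not> alg_indep_on (zariski_closure m n S) k g"
    by (intro not_alg_indep_onI[OF P(1) _ P(3)]) blast
qed

lemma trdeg_le_Un:
  assumes "trdeg_le m n S1 d" "trdeg_le m n S2 d"
  shows "trdeg_le m n (S1 \<union> S2) d"
  unfolding trdeg_le_def
proof (intro allI impI)
  fix k g assume "d < k" and g: "\<forall>i<k. g i \<in> poly_fun m n"
  have "\<not> alg_indep_on S1 k g" using assms(1) \<open>d < k\<close> g unfolding trdeg_le_def by blast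
  moreover have "\<not> alg_indep_on S2 k g" using assms(2) \<open>d < k\<close> g unfolding trdeg_le_def by blast
  ultimately show "\<not> alg_indep_on (S1 \<union> S2) k g" by (rule not_alg_indep_on_Un)
qed

lemma trdeg_le_UN:
  assumes "finite X" "\<And>x. x \<in> X \<Longrightarrow> trdeg_le m n (S x) d"
  shows "trdeg_le m n (\<Union>x\<in>X. S x) d"
  using assms
proof (induction X rule: finite_induct)
  case empty
  then show ?case using trdeg_le_empty by simp
next
  case (insert x X)
  then show ?case using trdeg_le_Un[of m n "S x" d "\<Union>x\<in>X. S x"] by simp
qed

lemma trdeg_le_image:
  assumes I: "finite I" "card I \<le> d"
    and entries: "\<And>i j. i < m \<Longrightarrow> j < n \<Longrightarrow> poly_in I (\<lambda>y. \<phi> y $$ (i, j))"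
  shows "trdeg_le m n (\<phi> ` T) d"
  unfolding trdeg_le_def
proof (intro allI impI)
  fix k g assume "d < k" and g: "\<forall>i<k. g i \<in> poly_fun m n"
  have "card I < card {..<k}" using I(2) \<open>d < k\<close> by simp
  moreover have "poly_in I (\<lambda>y. g i (\<phi> y))" if "i \<in> {..<k}" for i
    using poly_in_comp_poly_fun[OF _ I(1) entries] g that by blast
  ultimately have "\<exists>D P. poly_upto {..<k} D P \<and> (\<exists>z. P z \<noteq> 0) \<and> (\<forall>y. P (\<lambda>i. g i (\<phi> y)) = 0)"
    by (rule polys_algebraically_dependent[OF I(1) finite_lessThan, where f = "\<lambda>i y. g i (\<phi> y)"])
  then obtain D P z where P: "poly_upto {..<k} D P" "P z \<noteq> 0" "\<forall>y. P (\<lambda>i. g i (\<phi> y)) = 0"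
    by blast
  show "\<not> alg_indep_on (\<phi> ` T) k g"
    by (rule not_alg_indep_onI[OF P(1) _ P(2)]) (use P(3) in auto)
qed

text \<open>A relation on the image, pulled back to the parameters, vanishes off the hypersurface
  \<open>H = 0\<close> and hence everywhere.\<close>
lemma trdeg_le_image_dense:
  assumes I: "finite I"
    and entries: "\<And>i j. i < m \<Longrightarrow> j < n \<Longrightarrow> poly_in I (\<lambda>y. \<phi> y $$ (i, j))"
    and H: "poly_in I H" "H y0 \<noteq> 0"
    and generic: "trdeg_le m n (\<phi> ` {y. H y \<noteq> 0}) d"
  shows "trdeg_le m n (range \<phi>) d"
  unfolding trdeg_le_def
proof (intro allI impI)
  fix k g assume "d < k" and g: "\<forall>i<k. g i \<in> poly_fun m n"
  then have "\<not> alg_indep_on (\<phi> ` {y. H y \<noteq> 0}) k g" using generic unfolding trdeg_le_def by blast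
  then obtain D P z where P: "poly_upto {..<k} D P" "\<forall>A\<in>\<phi> ` {y. H y \<noteq> 0}. P (\<lambda>i. g i A) = 0"
    "P z \<noteq> 0"
    unfolding alg_indep_on_def by blast
  define Q where "Q y = P (\<lambda>i. g i (\<phi> y))" for y
  have "poly_in I Q"
    unfolding Q_def
  proof (rule poly_in_subst[OF I finite_lessThan, where P = P and f = "\<lambda>i y. g i (\<phi> y)"])
    show "poly_in {..<k} P" using P(1) unfolding poly_in_def by blast
    show "poly_in I (\<lambda>y. g i (\<phi> y))" if "i \<in> {..<k}" for i
      using poly_in_comp_poly_fun[OF _ I entries] g that by blast
  qed
  have "Q y = 0" for y
  proof (rule ccontr)
    assume "Q y \<noteq> 0"
    then obtain y' where "Q y' \<noteq> 0" "H y' \<noteq> 0"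
      using poly_in_common_nonzero[OF \<open>poly_in I Q\<close> H(1) _ H(2)] by blast
    then show False using P(2) unfolding Q_def by auto
  qed
  then show "\<not> alg_indep_on (range \<phi>) k g"
    by (intro not_alg_indep_onI[OF P(1) _ P(3)]) (auto simp: Q_def)
qed

lemma trdeg_le_carrier: "trdeg_le m n (carrier_mat m n) (m * n)"
proof -
  define \<psi> where "\<psi> y = mat m n (\<lambda>(i, j). y (i, j))" for y :: "nat \<times> nat \<Rightarrow> complex"
  have "trdeg_le m n (\<psi> ` UNIV) (m * n)"
  proof (rule trdeg_le_image[of "{..<m} \<times> {..<n}"])
    fix i j assume "i < m" "j < n"
    then show "poly_in ({..<m} \<times> {..<n}) (\<lambda>y. \<psi> y $$ (i, j))"
      using poly_in_var[of "{..<m} \<times> {..<n}" "(i, j)"] by (simp add: \<psi>_def)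
  qed (simp_all add: card_cartesian_product)
  moreover have "carrier_mat m n \<subseteq> \<psi> ` UNIV"
  proof
    fix A :: "complex mat" assume "A \<in> carrier_mat m n"
    then have "A = \<psi> (\<lambda>(i, j). A $$ (i, j))" by (intro eq_matI) (auto simp: \<psi>_def)
    then show "A \<in> \<psi> ` UNIV" by blast
  qed
  ultimately show ?thesis by (rule trdeg_le_subset)
qed

section \<open>Parametrising Hadamard products of matrices of bounded rank\<close>

text \<open>A matrix of rank at most \<open>r\<close> is determined by \<open>r\<close> of its columns \<open>js\<close>, spanning the
  column space, and by the coefficients expressing every other column in terms of them:
  \<open>Inl (i, j)\<close> is the entry \<open>(i, j)\<close> of a chosen column \<open>j\<close>, \<open>Inr (t, l)\<close> the coefficient of the
  \<open>t\<close>-th chosen column in column \<open>l\<close>.\<close>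
type_synonym rank_coord = "(nat \<times> nat) + (nat \<times> nat)"

definition rank_param :: "nat \<Rightarrow> nat \<Rightarrow> nat list \<Rightarrow> (rank_coord \<Rightarrow> complex) \<Rightarrow> complex mat" where
  "rank_param m n js y = mat m n (\<lambda>(i, l). if l \<in> set js then y (Inl (i, l))
      else (\<Sum>t<length js. y (Inr (t, l)) * y (Inl (i, js ! t))))"

definition rank_param_vars :: "nat \<Rightarrow> nat \<Rightarrow> nat list \<Rightarrow> rank_coord set" where
  "rank_param_vars m n js = Inl ` ({..<m} \<times> set js) \<union> Inr ` ({..<length js} \<times> ({..<n} - set js))"

text \<open>The \<open>m + n - 1\<close> coordinates that rescaling rows and columns can normalise to \<open>1\<close>:
  the first chosen column, the first row of the chosen columns, and the first coefficient
  of every other column.\<close>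
definition gauge_vars :: "nat \<Rightarrow> nat \<Rightarrow> nat list \<Rightarrow> rank_coord set" where
  "gauge_vars m n js = Inl ` ({..<m} \<times> {js ! 0} \<union> {0} \<times> set js) \<union> Inr ` ({0} \<times> ({..<n} - set js))"

definition hadamard_param :: "nat \<Rightarrow> nat \<Rightarrow> nat list list \<Rightarrow> (nat \<times> rank_coord \<Rightarrow> complex) \<Rightarrow> complex mat" where
  "hadamard_param m n Js y =
     mat m n (\<lambda>(i, l). \<Prod>p<length Js. rank_param m n (Js ! p) (\<lambda>v. y (p, v)) $$ (i, l))"

definition hadamard_param_vars :: "nat \<Rightarrow> nat \<Rightarrow> nat list list \<Rightarrow> (nat \<times> rank_coord) set" where
  "hadamard_param_vars m n Js = Sigma {..<length Js} (\<lambda>p. rank_param_vars m n (Js ! p))"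

definition gauge_fixed_vars :: "nat \<Rightarrow> nat \<Rightarrow> nat list list \<Rightarrow> (nat \<times> rank_coord) set" where
  "gauge_fixed_vars m n Js = Sigma {1..<length Js} (\<lambda>p. gauge_vars m n (Js ! p))"

definition gauge_fix :: "nat \<Rightarrow> nat \<Rightarrow> nat list list \<Rightarrow> (nat \<times> rank_coord \<Rightarrow> complex) \<Rightarrow> nat \<times> rank_coord \<Rightarrow> complex" where
  "gauge_fix m n Js z \<kappa> = (if \<kappa> \<in> gauge_fixed_vars m n Js then 1 else z \<kappa>)"

lemma rank_param_entry:
  "i < m \<Longrightarrow> l < n \<Longrightarrow> rank_param m n js y $$ (i, l) = (if l \<in> set js then y (Inl (i, l))
      else (\<Sum>t<length js. y (Inr (t, l)) * y (Inl (i, js ! t))))"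
  by (simp add: rank_param_def)

lemma hadamard_param_entry:
  "i < m \<Longrightarrow> l < n \<Longrightarrow>
    hadamard_param m n Js y $$ (i, l) = (\<Prod>p<length Js. rank_param m n (Js ! p) (\<lambda>v. y (p, v)) $$ (i, l))"
  by (simp add: hadamard_param_def)

lemma hadamard_param_carrier [simp]: "hadamard_param m n Js y \<in> carrier_mat m n"
  by (simp add: hadamard_param_def)

lemma finite_rank_param_vars [simp]: "finite (rank_param_vars m n js)"
  by (simp add: rank_param_vars_def)

lemma finite_gauge_vars [simp]: "finite (gauge_vars m n js)"
  by (simp add: gauge_vars_def)

lemma finite_hadamard_param_vars [simp]: "finite (hadamard_param_vars m n Js)"
  by (simp add: hadamard_param_vars_def)

lemma finite_gauge_fixed_vars [simp]: "finite (gauge_fixed_vars m n Js)"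
  by (simp add: gauge_fixed_vars_def)

lemma gauge_vars_subset: "0 < m \<Longrightarrow> js \<noteq> [] \<Longrightarrow> gauge_vars m n js \<subseteq> rank_param_vars m n js"
  unfolding gauge_vars_def rank_param_vars_def by auto

lemma gauge_fixed_vars_subset:
  assumes "0 < m" "\<forall>js\<in>set Js. js \<noteq> []"
  shows "gauge_fixed_vars m n Js \<subseteq> hadamard_param_vars m n Js"
proof
  fix \<kappa> assume "\<kappa> \<in> gauge_fixed_vars m n Js"
  then obtain p v where \<kappa>: "\<kappa> = (p, v)" "p \<in> {1..<length Js}" "v \<in> gauge_vars m n (Js ! p)"
    unfolding gauge_fixed_vars_def by blast
  then have "Js ! p \<noteq> []" using assms(2) by simp
  then have "v \<in> rank_param_vars m n (Js ! p)" using gauge_vars_subset[OF assms(1)] \<kappa>(3) by blast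
  then show "\<kappa> \<in> hadamard_param_vars m n Js" using \<kappa> unfolding hadamard_param_vars_def by simp
qed

lemma poly_in_rank_param_entry:
  assumes "i < m" "l < n"
  shows "poly_in (rank_param_vars m n js) (\<lambda>y. rank_param m n js y $$ (i, l))"
proof (cases "l \<in> set js")
  case True
  then have "Inl (i, l) \<in> rank_param_vars m n js"
    using assms by (simp add: rank_param_vars_def)
  then have "poly_in (rank_param_vars m n js) (\<lambda>y. y (Inl (i, l)))"
    by (rule poly_in_var[OF finite_rank_param_vars])
  then show ?thesis using assms True by (simp add: rank_param_entry)
next
  case False
  have "poly_in (rank_param_vars m n js) (\<lambda>y. \<Sum>t<length js. y (Inr (t, l)) * y (Inl (i, js ! t)))"
  proof (intro poly_in_sum poly_in_mult poly_in_var finite_rank_param_vars finite_lessThan)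
    fix t assume "t \<in> {..<length js}"
    then show "Inr (t, l) \<in> rank_param_vars m n js" "Inl (i, js ! t) \<in> rank_param_vars m n js"
      using assms False by (auto simp: rank_param_vars_def)
  qed
  then show ?thesis using assms False by (simp add: rank_param_entry)
qed

lemma poly_in_hadamard_param_entry:
  assumes "i < m" "l < n"
  shows "poly_in (hadamard_param_vars m n Js) (\<lambda>y. hadamard_param m n Js y $$ (i, l))"
proof -
  have "poly_in (hadamard_param_vars m n Js) (\<lambda>y. rank_param m n (Js ! p) (\<lambda>v. y (p, v)) $$ (i, l))"
    if "p < length Js" for p
  proof (rule poly_in_subst[OF _ _ poly_in_rank_param_entry[OF assms], where f = "\<lambda>v y. y (p, v)"])
    show "poly_in (hadamard_param_vars m n Js) (\<lambda>y. y (p, v))" if "v \<in> rank_param_vars m n (Js ! p)" for v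
      using that \<open>p < length Js\<close> by (intro poly_in_var) (auto simp: hadamard_param_vars_def)
  qed simp_all
  then have "poly_in (hadamard_param_vars m n Js)
      (\<lambda>y. \<Prod>p<length Js. rank_param m n (Js ! p) (\<lambda>v. y (p, v)) $$ (i, l))"
    by (intro poly_in_prod) auto
  then show ?thesis using assms by (simp add: hadamard_param_entry)
qed

lemma poly_in_gauge_fix_entry:
  assumes "i < m" "l < n"
  shows "poly_in (hadamard_param_vars m n Js - gauge_fixed_vars m n Js)
           (\<lambda>z. hadamard_param m n Js (gauge_fix m n Js z) $$ (i, l))"
proof (rule poly_in_subst[OF _ _ poly_in_hadamard_param_entry[OF assms], where f = "\<lambda>\<kappa> z. gauge_fix m n Js z \<kappa>"])
  fix \<kappa> assume \<kappa>: "\<kappa> \<in> hadamard_param_vars m n Js"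
  show "poly_in (hadamard_param_vars m n Js - gauge_fixed_vars m n Js) (\<lambda>z. gauge_fix m n Js z \<kappa>)"
  proof (cases "\<kappa> \<in> gauge_fixed_vars m n Js")
    case True
    then show ?thesis unfolding gauge_fix_def by (simp add: poly_in_const)
  next
    case False
    then have "poly_in (hadamard_param_vars m n Js - gauge_fixed_vars m n Js) (\<lambda>z. z \<kappa>)"
      using \<kappa> by (intro poly_in_var) simp_all
    then show ?thesis unfolding gauge_fix_def using False by simp
  qed
qed simp_all

definition rescale_coords ::
    "(nat \<Rightarrow> complex) \<Rightarrow> (nat \<Rightarrow> complex) \<Rightarrow> nat list \<Rightarrow> (rank_coord \<Rightarrow> complex) \<Rightarrow> rank_coord \<Rightarrow> complex" where
  "rescale_coords a b js y v = (case v of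
      Inl (i, j) \<Rightarrow> a i * b j * y (Inl (i, j))
    | Inr (t, l) \<Rightarrow> y (Inr (t, l)) * b l / b (js ! t))"

lemma rank_param_rescale_coords:
  assumes "set js \<subseteq> {..<n}" "\<forall>l<n. b l \<noteq> 0" "i < m" "l < n"
  shows "rank_param m n js (rescale_coords a b js y) $$ (i, l) = a i * b l * rank_param m n js y $$ (i, l)"
proof (cases "l \<in> set js")
  case True
  then show ?thesis using assms(3,4) by (simp add: rank_param_entry rescale_coords_def)
next
  case False
  have "rescale_coords a b js y (Inr (t, l)) * rescale_coords a b js y (Inl (i, js ! t))
      = a i * b l * (y (Inr (t, l)) * y (Inl (i, js ! t)))" if "t < length js" for t
  proof -
    have "b (js ! t) \<noteq> 0" using assms(1,2) that nth_mem by blast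
    then show ?thesis by (simp add: rescale_coords_def field_simps)
  qed
  then show ?thesis using assms(3,4) False by (simp add: rank_param_entry sum_distrib_left)
qed

lemma rank_param_gauge_normal:
  assumes js: "set js \<subseteq> {..<n}" "js \<noteq> []" and m: "0 < m"
    and nz: "\<forall>v\<in>gauge_vars m n js. y v \<noteq> 0"
  shows "\<exists>a b y'. (\<forall>l<n. b l \<noteq> 0) \<and> (\<forall>v\<in>gauge_vars m n js. y' v = 1) \<and>
     (\<forall>i<m. \<forall>l<n. rank_param m n js y $$ (i, l) = a i * b l * rank_param m n js y' $$ (i, l))"
proof -
  define j1 where "j1 = js ! 0"
  have j1: "j1 \<in> set js" using js(2) unfolding j1_def by simp
  have y_col: "y (Inl (i, j1)) \<noteq> 0" if "i < m" for i
    using nz that unfolding gauge_vars_def j1_def by auto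
  have y_row: "y (Inl (0, j)) \<noteq> 0" if "j \<in> set js" for j
    using nz that unfolding gauge_vars_def by auto
  have y_coeff: "y (Inr (0, l)) \<noteq> 0" if "l < n" "l \<notin> set js" for l
    using nz that unfolding gauge_vars_def by auto
  define a where "a i = y (Inl (i, j1))" for i
  define b where "b l = (if l \<in> set js then y (Inl (0, l)) / y (Inl (0, j1)) else y (Inr (0, l)))" for l
  have b: "b l \<noteq> 0" if "l < n" for l
    using y_row y_coeff that j1 by (auto simp: b_def)
  have b_inv: "\<forall>l<n. inverse (b l) \<noteq> 0" using b by simp
  define y' where "y' = rescale_coords (\<lambda>i. inverse (a i)) (\<lambda>l. inverse (b l)) js y"
  have "y' v = 1" if "v \<in> gauge_vars m n js" for v
    using that y_col y_row y_coeff j1 js(2)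
    by (auto simp: gauge_vars_def y'_def rescale_coords_def a_def b_def j1_def field_simps)
  moreover have "rank_param m n js y $$ (i, l) = a i * b l * rank_param m n js y' $$ (i, l)"
    if "i < m" "l < n" for i l
    using rank_param_rescale_coords[OF js(1) b_inv that, where a = "\<lambda>i. inverse (a i)" and y = y]
      y_col[OF that(1)] b[OF that(2)]
    by (simp add: y'_def a_def field_simps)
  ultimately show ?thesis using b by blast
qed

lemma hadamard_param_entry_first:
  assumes "Js \<noteq> []" "i < m" "l < n"
  shows "hadamard_param m n Js y $$ (i, l) = rank_param m n (Js ! 0) (\<lambda>v. y (0, v)) $$ (i, l) *
    (\<Prod>p\<in>{1..<length Js}. rank_param m n (Js ! p) (\<lambda>v. y (p, v)) $$ (i, l))"
proof -
  have "{..<length Js} = insert 0 {1..<length Js}" using assms(1) by auto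
  then show ?thesis using assms(2,3) by (simp add: hadamard_param_entry)
qed

lemma hadamard_param_move_scalings:
  assumes Js: "Js \<noteq> []" and il: "i < m" "l < n"
    and factors: "\<And>p. p \<in> {1..<length Js} \<Longrightarrow> rank_param m n (Js ! p) (\<lambda>v. y (p, v)) $$ (i, l)
      = A p i * B p l * rank_param m n (Js ! p) (\<lambda>v. y' (p, v)) $$ (i, l)"
    and first: "rank_param m n (Js ! 0) (\<lambda>v. y' (0, v)) $$ (i, l) = (\<Prod>p\<in>{1..<length Js}. A p i) *
      (\<Prod>p\<in>{1..<length Js}. B p l) * rank_param m n (Js ! 0) (\<lambda>v. y (0, v)) $$ (i, l)"
  shows "hadamard_param m n Js y $$ (i, l) = hadamard_param m n Js y' $$ (i, l)"
proof -
  have "(\<Prod>p\<in>{1..<length Js}. rank_param m n (Js ! p) (\<lambda>v. y (p, v)) $$ (i, l))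
      = (\<Prod>p\<in>{1..<length Js}. A p i) * (\<Prod>p\<in>{1..<length Js}. B p l) *
        (\<Prod>p\<in>{1..<length Js}. rank_param m n (Js ! p) (\<lambda>v. y' (p, v)) $$ (i, l))"
    using factors by (simp add: prod.distrib)
  then show ?thesis
    using first by (simp add: hadamard_param_entry_first[OF Js il] ac_simps)
qed

text \<open>Off the hypersurface where a gauge coordinate vanishes, the row and column scalings of
  the factors \<open>p \<ge> 1\<close> can be pushed into the first factor.\<close>
lemma hadamard_param_gauge_fix:
  assumes Js: "Js \<noteq> []" "\<forall>js\<in>set Js. set js \<subseteq> {..<n} \<and> js \<noteq> []" and m: "0 < m"
    and nz: "\<forall>\<kappa>\<in>gauge_fixed_vars m n Js. y \<kappa> \<noteq> 0"
  shows "\<exists>z. hadamard_param m n Js y = hadamard_param m n Js (gauge_fix m n Js z)"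
proof -
  define S where "S = {1..<length Js}"
  have "\<exists>a b y'. (\<forall>l<n. b l \<noteq> 0) \<and> (\<forall>v\<in>gauge_vars m n (Js ! p). y' v = 1) \<and>
     (\<forall>i<m. \<forall>l<n. rank_param m n (Js ! p) (\<lambda>v. y (p, v)) $$ (i, l) = a i * b l * rank_param m n (Js ! p) y' $$ (i, l))"
    if "p \<in> S" for p
  proof (rule rank_param_gauge_normal[OF _ _ m])
    have "p < length Js" using that by (simp add: S_def)
    then show "set (Js ! p) \<subseteq> {..<n}" "Js ! p \<noteq> []" using Js(2) nth_mem by blast+
    show "\<forall>v\<in>gauge_vars m n (Js ! p). y (p, v) \<noteq> 0"
      using nz that by (simp add: S_def gauge_fixed_vars_def)
  qed
  then obtain A B Y where ABY: "\<forall>p\<in>S. (\<forall>l<n. B p l \<noteq> 0) \<and> (\<forall>v\<in>gauge_vars m n (Js ! p). Y p v = 1) \<and>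
     (\<forall>i<m. \<forall>l<n. rank_param m n (Js ! p) (\<lambda>v. y (p, v)) $$ (i, l) = A p i * B p l * rank_param m n (Js ! p) (Y p) $$ (i, l))"
    by metis
  define y0 where "y0 = rescale_coords (\<lambda>i. \<Prod>p\<in>S. A p i) (\<lambda>l. \<Prod>p\<in>S. B p l) (Js ! 0) (\<lambda>v. y (0, v))"
  define z where "z = (\<lambda>(p, v). if p = 0 then y0 v else Y p v)"
  have fix_0: "(\<lambda>v. gauge_fix m n Js z (0, v)) = y0"
    by (auto simp: gauge_fix_def gauge_fixed_vars_def z_def)
  have fix_p: "(\<lambda>v. gauge_fix m n Js z (p, v)) = Y p" if "p \<in> S" for p
    using that ABY by (auto simp: gauge_fix_def gauge_fixed_vars_def z_def S_def)
  have "\<forall>l<n. (\<Prod>p\<in>S. B p l) \<noteq> 0" using ABY by (auto simp: S_def prod_zero_iff)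
  moreover have "set (Js ! 0) \<subseteq> {..<n}" using Js by simp
  ultimately have "hadamard_param m n Js y $$ (i, l) = hadamard_param m n Js (gauge_fix m n Js z) $$ (i, l)"
    if il: "i < m" "l < n" for i l
    using ABY fix_p il unfolding S_def
    by (intro hadamard_param_move_scalings[OF Js(1) il, where A = A and B = B])
      (simp_all add: fix_0 y0_def rank_param_rescale_coords S_def)
  then show ?thesis by (intro exI[of _ z] eq_matI) (auto simp: hadamard_param_def)
qed

lemma card_column_selection:
  assumes "distinct js" "set js \<subseteq> {..<n}"
  shows "card (set js) = length js" "length js \<le> n" "card ({..<n} - set js) = n - length js"
proof -
  show c: "card (set js) = length js" using assms(1) by (rule distinct_card)
  show "length js \<le> n" using card_mono[OF finite_lessThan assms(2)] c by simp
  show "card ({..<n} - set js) = n - length js" using card_Diff_subset[OF finite_set assms(2)] c by simp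
qed

lemma card_rank_param_vars:
  assumes "distinct js" "length js = r" "set js \<subseteq> {..<n}"
  shows "card (rank_param_vars m n js) = r * (m + n - r)"
  unfolding rank_param_vars_def using card_column_selection[OF assms(1,3)] assms(2)
  by (subst card_Un_disjoint) (auto simp: card_image card_cartesian_product algebra_simps diff_mult_distrib2)

lemma card_gauge_vars:
  assumes "distinct js" "length js = r" "set js \<subseteq> {..<n}" "js \<noteq> []" "0 < m"
  shows "card (gauge_vars m n js) = m + n - 1"
proof -
  have j0: "js ! 0 \<in> set js" using assms(4) by simp
  have "card ({..<m} \<times> {js ! 0} \<union> {0} \<times> set js) + card ({..<m} \<times> {js ! 0} \<inter> {0} \<times> set js)
      = m + r"
    using card_Un_Int[of "{..<m} \<times> {js ! 0}" "{0} \<times> set js"] card_column_selection[OF assms(1,3)] assms(2)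
    by (simp add: card_cartesian_product)
  moreover have "{..<m} \<times> {js ! 0} \<inter> {0} \<times> set js = {(0, js ! 0)}" using assms(5) j0 by auto
  moreover have "0 < r" using assms(2,4) by auto
  ultimately show ?thesis
    unfolding gauge_vars_def using card_column_selection[OF assms(1,3)] assms(2)
    by (subst card_Un_disjoint) (auto simp: card_image card_cartesian_product)
qed

lemma card_hadamard_param_vars:
  assumes "\<forall>js\<in>set Js. distinct js \<and> length js = r \<and> set js \<subseteq> {..<n}"
  shows "card (hadamard_param_vars m n Js) = length Js * (r * (m + n - r))"
  unfolding hadamard_param_vars_def using assms
  by (simp add: card_SigmaI card_rank_param_vars)

lemma card_gauge_fixed_vars:
  assumes "\<forall>js\<in>set Js. distinct js \<and> length js = r \<and> set js \<subseteq> {..<n}" "0 < r" "0 < m"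
  shows "card (gauge_fixed_vars m n Js) = (length Js - 1) * (m + n - 1)"
proof -
  have "card (gauge_vars m n (Js ! p)) = m + n - 1" if "p \<in> {1..<length Js}" for p
  proof -
    have "Js ! p \<in> set Js" using that by simp
    then have "distinct (Js ! p)" "length (Js ! p) = r" "set (Js ! p) \<subseteq> {..<n}"
      using assms(1) by auto
    then show ?thesis using assms(2,3) by (intro card_gauge_vars[of _ r]) auto
  qed
  then show ?thesis unfolding gauge_fixed_vars_def by (simp add: card_SigmaI)
qed

lemma trdeg_le_hadamard_param:
  assumes Js: "Js \<noteq> []" "\<forall>js\<in>set Js. set js \<subseteq> {..<n} \<and> js \<noteq> []" and m: "0 < m"
  shows "trdeg_le m n (range (hadamard_param m n Js))
           (card (hadamard_param_vars m n Js - gauge_fixed_vars m n Js))"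
proof -
  define gauge where "gauge y = (\<Prod>\<kappa>\<in>gauge_fixed_vars m n Js. y \<kappa>)"
    for y :: "nat \<times> rank_coord \<Rightarrow> complex"
  have gauge_poly: "poly_in (hadamard_param_vars m n Js) gauge"
    using gauge_fixed_vars_subset[OF m] Js(2) unfolding gauge_def
    by (intro poly_in_prod poly_in_var) auto
  have gauge_one: "gauge (\<lambda>_. 1) \<noteq> 0" by (simp add: gauge_def)
  have generic: "hadamard_param m n Js ` {y. gauge y \<noteq> 0}
      \<subseteq> range (\<lambda>z. hadamard_param m n Js (gauge_fix m n Js z))"
    using hadamard_param_gauge_fix[OF Js m] by (fastforce simp: gauge_def)
  have gauge_fixed: "trdeg_le m n (range (\<lambda>z. hadamard_param m n Js (gauge_fix m n Js z)))
      (card (hadamard_param_vars m n Js - gauge_fixed_vars m n Js))"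
    by (rule trdeg_le_image[where I = "hadamard_param_vars m n Js - gauge_fixed_vars m n Js"])
      (simp_all add: poly_in_gauge_fix_entry)
  show ?thesis
    by (rule trdeg_le_image_dense[OF finite_hadamard_param_vars poly_in_hadamard_param_entry
          gauge_poly gauge_one trdeg_le_subset[OF gauge_fixed generic]])
qed

lemma (in vec_space) rank_le_spanning_columns:
  assumes A: "A \<in> carrier_mat n nc" and rk: "rank A \<le> r" and rn: "r \<le> nc"
  shows "\<exists>J. J \<subseteq> {..<nc} \<and> card J = r \<and> (\<forall>l<nc. col A l \<in> span (col A ` J))"
proof -
  have cols: "set (cols A) = col A ` {..<nc}" using A by (auto simp: cols_def)
  obtain S where S: "maximal S (\<lambda>T. T \<subseteq> set (cols A) \<and> lin_indpt T)"
    using maximal_exists[of "\<lambda>T. T \<subseteq> set (cols A) \<and> lin_indpt T" "card (set (cols A))" "{}"]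
    by (meson List.finite_set card_mono empty_iff empty_subsetI finite_lin_indpt2 rev_finite_subset)
  have S_cols: "S \<subseteq> set (cols A)" and S_indpt: "lin_indpt S" using S unfolding maximal_def by auto
  have carrier: "set (cols A) \<subseteq> carrier_vec n" using A cols_dim by blast
  then have S_carrier: "S \<subseteq> carrier_vec n" using S_cols by blast
  have span_S: "c \<in> span S" if "c \<in> set (cols A)" for c
  proof (rule ccontr)
    assume c: "c \<notin> span S"
    then have "c \<notin> S" using in_own_span[OF S_carrier] by blast
    then have "lin_indpt (insert c S)"
      using lin_dep_iff_in_span[OF S_carrier S_indpt _ \<open>c \<notin> S\<close>] c that carrier by auto
    then have "insert c S = S" using S that unfolding maximal_def by blast
    then show False using \<open>c \<notin> S\<close> by blast
  qed
  obtain J0 where J0: "J0 \<subseteq> {..<nc}" "inj_on (col A) J0" "S = col A ` J0"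
    using S_cols subset_image_inj[of S "col A" "{..<nc}"] unfolding cols by blast
  have "card J0 \<le> r" using rank_card_indpt[OF A S] J0(2,3) card_image rk by metis
  moreover have "finite J0" using J0(1) finite_subset by blast
  ultimately obtain K where K: "K \<subseteq> {..<nc} - J0" "card K = r - card J0"
    using obtain_subset_with_card_n[of "r - card J0" "{..<nc} - J0"] J0(1) rn
    by (metis card_Diff_subset card_lessThan diff_le_mono finite_lessThan)
  then have "card (J0 \<union> K) = r"
    using \<open>card J0 \<le> r\<close> \<open>finite J0\<close> finite_subset[OF K(1)]
    by (subst card_Un_disjoint) auto
  moreover have "col A l \<in> span (col A ` (J0 \<union> K))" if "l < nc" for l
    using span_S[of "col A l"] span_is_monotone[of S "col A ` (J0 \<union> K)"] that J0(3)
    unfolding cols by blast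
  ultimately show ?thesis using J0(1) K(1) by (intro exI[of _ "J0 \<union> K"]) auto
qed

lemma (in vec_space) rank_le_column_combination:
  assumes A: "A \<in> carrier_mat n nc" and rk: "rank A \<le> r" and rn: "r \<le> nc"
  shows "\<exists>js C. distinct js \<and> length js = r \<and> set js \<subseteq> {..<nc} \<and>
     (\<forall>l<nc. \<forall>i<n. A $$ (i, l) = (\<Sum>t<r. C l t * A $$ (i, js ! t)))"
proof -
  obtain J where J: "J \<subseteq> {..<nc}" "card J = r" "\<forall>l<nc. col A l \<in> span (col A ` J)"
    using rank_le_spanning_columns[OF A rk rn] by blast
  define js where "js = sorted_list_of_set J"
  have "finite J" using J(1) finite_subset by blast
  then have js: "distinct js" "length js = r" "set js = J" using J(2) by (auto simp: js_def)
  define vs where "vs = map (col A) js"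
  have vs_carrier: "set vs \<subseteq> carrier_vec n" using js J(1) A by (auto simp: vs_def)
  have "\<exists>c. col A l = lincomb_list c vs" if "l < nc" for l
    using J(3) that span_list_as_span[OF vs_carrier] js(3) in_span_listE
    by (metis vs_def list.set_map)
  then obtain C where C: "\<forall>l<nc. col A l = lincomb_list (C l) vs" by metis
  have "A $$ (i, l) = (\<Sum>t<r. C l t * A $$ (i, js ! t))" if il: "l < nc" "i < n" for i l
  proof -
    have dims: "\<forall>w\<in>set vs. dim_vec w = n" using vs_carrier by auto
    have "A $$ (i, l) = col A l $ i" using A il by simp
    also have "\<dots> = (mat_of_cols n vs *\<^sub>v vec (length vs) (C l)) $ i"
      using C il lincomb_list_as_mat_mult[OF dims] by simp
    also have "\<dots> = (\<Sum>t<r. vs ! t $ i * C l t)"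
      using il js by (simp add: scalar_prod_def vs_def atLeast0LessThan mat_of_cols_def)
    also have "\<dots> = (\<Sum>t<r. C l t * A $$ (i, js ! t))"
    proof (rule sum.cong[OF refl])
      fix t assume t: "t \<in> {..<r}"
      then have "js ! t < nc" using js J(1) nth_mem by fastforce
      then show "vs ! t $ i * C l t = C l t * A $$ (i, js ! t)" using t js il A by (simp add: vs_def)
    qed
    finally show ?thesis .
  qed
  then show ?thesis using js J(1) by blast
qed

lemma rank_le_cone_rank_param:
  assumes A: "A \<in> rank_le_cone m n r" and rn: "r \<le> n"
  shows "\<exists>js y. distinct js \<and> length js = r \<and> set js \<subseteq> {..<n} \<and> A = rank_param m n js y"
proof -
  have A_carrier: "A \<in> carrier_mat m n" and rk: "vec_space.rank m A \<le> r"
    using A unfolding rank_le_cone_def by auto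
  obtain js C where js: "distinct js" "length js = r" "set js \<subseteq> {..<n}"
    and C: "\<forall>l<n. \<forall>i<m. A $$ (i, l) = (\<Sum>t<r. C l t * A $$ (i, js ! t))"
    using vec_space.rank_le_column_combination[OF A_carrier rk rn] by blast
  define y where "y = (\<lambda>v. case v of Inl (i, j) \<Rightarrow> A $$ (i, j) | Inr (t, l) \<Rightarrow> C l t)"
  have "A $$ (i, l) = rank_param m n js y $$ (i, l)" if "i < m" "l < n" for i l
    using that C js(2) by (simp add: rank_param_entry y_def)
  then have "A = rank_param m n js y"
    using A_carrier by (intro eq_matI) (auto simp: rank_param_def)
  then show ?thesis using js by blast
qed

section \<open>Hadamard powers of rank varieties\<close>

definition col_selections :: "nat \<Rightarrow> nat \<Rightarrow> nat list set" where
  "col_selections n r = {js. distinct js \<and> length js = r \<and> set js \<subseteq> {..<n}}"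

definition hadamard_param_image :: "nat \<Rightarrow> nat \<Rightarrow> nat \<Rightarrow> nat \<Rightarrow> complex mat set" where
  "hadamard_param_image m n r s =
     (\<Union>Js\<in>{Js. set Js \<subseteq> col_selections n r \<and> length Js = s}. range (hadamard_param m n Js))"

lemma finite_col_selections: "finite (col_selections n r)"
proof (rule finite_subset)
  show "col_selections n r \<subseteq> {js. set js \<subseteq> {..<n} \<and> length js = r}"
    unfolding col_selections_def by auto
qed (rule finite_lists_length_eq, simp)

lemma hadamard_carrier: "A \<in> carrier_mat m n \<Longrightarrow> hadamard A B \<in> carrier_mat m n"
  unfolding hadamard_def carrier_mat_def by simp

lemma hadamard_param_image_carrier: "hadamard_param_image m n r s \<subseteq> carrier_mat m n"
  unfolding hadamard_param_image_def by auto

lemma hadamard_mem_hadamard_param_image: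
  assumes A: "A \<in> rank_le_cone m n r" and rn: "r \<le> n" and B: "B \<in> hadamard_param_image m n r s"
  shows "hadamard A B \<in> hadamard_param_image m n r (Suc s)"
proof -
  obtain js y0 where js: "js \<in> col_selections n r" "A = rank_param m n js y0"
    using rank_le_cone_rank_param[OF A rn] unfolding col_selections_def by blast
  obtain Js y1 where Js: "set Js \<subseteq> col_selections n r" "length Js = s" "B = hadamard_param m n Js y1"
    using B unfolding hadamard_param_image_def by blast
  define y where "y = (\<lambda>(p, v). if p = 0 then y0 v else y1 (p - 1, v))"
  have "hadamard A B $$ (i, l) = hadamard_param m n (js # Js) y $$ (i, l)" if il: "i < m" "l < n" for i l
  proof -
    have "hadamard A B $$ (i, l) = A $$ (i, l) * B $$ (i, l)"
      using il js(2) by (simp add: hadamard_def rank_param_def)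
    also have "\<dots> = rank_param m n js y0 $$ (i, l) *
        (\<Prod>p<length Js. rank_param m n (Js ! p) (\<lambda>v. y1 (p, v)) $$ (i, l))"
      using il js(2) Js(3) by (simp add: hadamard_param_entry)
    also have "\<dots> = hadamard_param m n (js # Js) y $$ (i, l)"
      using il by (simp add: hadamard_param_entry prod.lessThan_Suc_shift y_def del: prod.lessThan_Suc)
    finally show ?thesis .
  qed
  then have "hadamard A B = hadamard_param m n (js # Js) y"
    using js(2) by (intro eq_matI) (auto simp: hadamard_def hadamard_param_def rank_param_def)
  moreover have "set (js # Js) \<subseteq> col_selections n r" "length (js # Js) = Suc s" using js Js by auto
  ultimately show ?thesis unfolding hadamard_param_image_def by blast
qed

lemma rank_le_cone_subset_hadamard_param_image:
  assumes "r \<le> n"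
  shows "rank_le_cone m n r \<subseteq> hadamard_param_image m n r 1"
proof
  fix A assume A: "A \<in> rank_le_cone m n r"
  have ones: "hadamard_param m n [] y \<in> hadamard_param_image m n r 0" for y
    unfolding hadamard_param_image_def by auto
  have "hadamard A (hadamard_param m n [] y) = A" for y
    using A by (intro eq_matI) (auto simp: rank_le_cone_def hadamard_def hadamard_param_def)
  then show "A \<in> hadamard_param_image m n r 1"
    using hadamard_mem_hadamard_param_image[OF A assms ones] by simp
qed

lemma poly_fun_hadamard_left:
  assumes A: "A \<in> carrier_mat m n" and f: "f \<in> poly_fun m n"
  shows "(\<lambda>B. f (hadamard A B)) \<in> poly_fun m n"
  using f
proof (induction rule: poly_fun.induct)
  case (pf_var i j)
  have "(\<lambda>B. A $$ (i, j) * B $$ (i, j)) \<in> poly_fun m n"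
    by (rule poly_fun.pf_mult[OF poly_fun.pf_const poly_fun.pf_var[OF pf_var]])
  then show ?case using A pf_var by (simp add: hadamard_def)
qed (auto intro: poly_fun.intros)

lemma zariski_closed_hadamard_preimage:
  assumes A: "A \<in> carrier_mat m n" and C: "zariski_closed m n C"
  shows "zariski_closed m n {B \<in> carrier_mat m n. hadamard A B \<in> C}"
proof -
  obtain F where F: "F \<subseteq> poly_fun m n" "C = {M \<in> carrier_mat m n. \<forall>f\<in>F. f M = 0}"
    using C unfolding zariski_closed_def by blast
  have "(\<lambda>f B. f (hadamard A B)) ` F \<subseteq> poly_fun m n"
    using F(1) poly_fun_hadamard_left[OF A] by blast
  moreover have "{B \<in> carrier_mat m n. hadamard A B \<in> C}
      = {B \<in> carrier_mat m n. \<forall>f\<in>(\<lambda>f B. f (hadamard A B)) ` F. f B = 0}"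
    unfolding F(2) using hadamard_carrier[OF A] by auto
  ultimately show ?thesis unfolding zariski_closed_def by blast
qed

lemma hadamard_power_cone_subset:
  assumes rn: "r \<le> n"
  shows "hadamard_power_cone m n (rank_le_cone m n r) k
           \<subseteq> zariski_closure m n (hadamard_param_image m n r (Suc k))"
proof (induction k)
  case 0
  then show ?case
    using rank_le_cone_subset_hadamard_param_image[OF rn] by (simp add: zariski_closure_mono)
next
  case (Suc k)
  define C where "C = zariski_closure m n (hadamard_param_image m n r (Suc (Suc k)))"
  have C: "zariski_closed m n C"
    unfolding C_def by (rule zariski_closed_closure[OF hadamard_param_image_carrier])
  \<comment> \<open>for fixed \<open>A\<close>, the matrices \<open>B\<close> with \<open>A \<star> B \<in> C\<close> form a closed set containing
    the parametrised products, hence their closure\<close>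
  have "hadamard A B \<in> C"
    if A: "A \<in> rank_le_cone m n r" and B: "B \<in> hadamard_power_cone m n (rank_le_cone m n r) k" for A B
  proof -
    have A_carrier: "A \<in> carrier_mat m n" using A by (simp add: rank_le_cone_def)
    have "hadamard_param_image m n r (Suc k) \<subseteq> {B \<in> carrier_mat m n. hadamard A B \<in> C}"
      using hadamard_mem_hadamard_param_image[OF A rn] hadamard_param_image_carrier
        zariski_closure_superset unfolding C_def by blast
    then have "zariski_closure m n (hadamard_param_image m n r (Suc k))
        \<subseteq> {B \<in> carrier_mat m n. hadamard A B \<in> C}"
      by (rule zariski_closure_least[OF zariski_closed_hadamard_preimage[OF A_carrier C]])
    then show ?thesis using Suc.IH B by blast
  qed
  then show ?case
    unfolding C_def[symmetric] by (auto intro!: zariski_closure_least[OF C])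
qed

lemma trdeg_le_hadamard_param_image:
  assumes "0 < r" "r \<le> n" "0 < m" "0 < s"
  shows "trdeg_le m n (hadamard_param_image m n r s) (s * (r * (m + n - r)) - (s - 1) * (m + n - 1))"
  unfolding hadamard_param_image_def
proof (rule trdeg_le_UN)
  show "finite {Js. set Js \<subseteq> col_selections n r \<and> length Js = s}"
    by (rule finite_lists_length_eq[OF finite_col_selections])
  fix Js assume "Js \<in> {Js. set Js \<subseteq> col_selections n r \<and> length Js = s}"
  then have Js: "Js \<noteq> []" "\<forall>js\<in>set Js. distinct js \<and> length js = r \<and> set js \<subseteq> {..<n}" "length Js = s"
    using assms(4) unfolding col_selections_def by auto
  then have nonempty: "\<forall>js\<in>set Js. set js \<subseteq> {..<n} \<and> js \<noteq> []" using assms(1) by auto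
  have "card (hadamard_param_vars m n Js - gauge_fixed_vars m n Js)
      = s * (r * (m + n - r)) - (s - 1) * (m + n - 1)"
    using card_Diff_subset[OF finite_gauge_fixed_vars gauge_fixed_vars_subset[OF assms(3)]] nonempty
      card_hadamard_param_vars[OF Js(2)] card_gauge_fixed_vars[OF Js(2) assms(1,3)] Js(3)
    by simp
  then show "trdeg_le m n (range (hadamard_param m n Js)) (s * (r * (m + n - r)) - (s - 1) * (m + n - 1))"
    using trdeg_le_hadamard_param[OF Js(1) nonempty assms(3)] by simp
qed

lemma hadamard_dim_bound_int:
  assumes "1 \<le> s" "1 \<le> r" "r \<le> m" "r \<le> n"
  shows "int (s * (r * (m + n - r)) - (s - 1) * (m + n - 1))
       = int s * int r * (int m + int n - int r) - (int s - 1) * (int m + int n - 1)"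
proof -
  have R: "int (r * (m + n - r)) = int r * (int m + int n - int r)" using assms by (simp add: of_nat_diff)
  have F: "int (m + n - 1) = int m + int n - 1" using assms by (simp add: of_nat_diff)
  have "int r * (int m + int n - int r) - (int m + int n - 1) = (int r - 1) * (int m + int n - int r - 1)"
    by (simp add: algebra_simps)
  also have "\<dots> \<ge> 0" using assms by (intro mult_nonneg_nonneg) auto
  finally have "m + n - 1 \<le> r * (m + n - r)" using R F by linarith
  then have le: "(s - 1) * (m + n - 1) \<le> s * (r * (m + n - r))" by (intro mult_le_mono) auto
  have "int (s * (r * (m + n - r)) - (s - 1) * (m + n - 1))
      = int s * int (r * (m + n - r)) - int (s - 1) * int (m + n - 1)"
    by (simp only: of_nat_diff[OF le] of_nat_mult)
  also have "\<dots> = int s * (int r * (int m + int n - int r)) - (int s - 1) * (int m + int n - 1)"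
    using assms(1) by (simp only: R F of_nat_diff of_nat_1)
  finally show ?thesis by (simp only: mult.assoc)
qed

theorem proposition4p20:
  fixes m n r s :: nat
  assumes "s \<ge> 1" and "1 \<le> r" and "r \<le> min m n"
  shows "zdim m n (hadamard_power_cone m n (rank_le_cone m n r) (s - 1))
           \<le> enat (nat (min (int s * int r * (int m + int n - int r)
                                - (int s - 1) * (int m + int n - 1))
                               (int m * int n)))"
proof -
  have r: "0 < r" "r \<le> m" "r \<le> n" and m: "0 < m" using assms by auto
  define V where "V = hadamard_power_cone m n (rank_le_cone m n r) (s - 1)"
  define d where "d = s * (r * (m + n - r)) - (s - 1) * (m + n - 1)"
  have "V \<subseteq> zariski_closure m n (hadamard_param_image m n r s)"
    using hadamard_power_cone_subset[OF r(3), of m "s - 1"] assms(1) unfolding V_def by simp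
  moreover have "trdeg_le m n (zariski_closure m n (hadamard_param_image m n r s)) d"
    using trdeg_le_zariski_closure[OF hadamard_param_image_carrier trdeg_le_hadamard_param_image]
      r m assms(1) unfolding d_def by simp
  moreover have "zariski_closure m n (hadamard_param_image m n r s) \<subseteq> carrier_mat m n"
    by (rule zariski_closure_least[OF zariski_closed_carrier hadamard_param_image_carrier])
  ultimately have "trdeg_le m n V d" "trdeg_le m n V (m * n)"
    using trdeg_le_subset trdeg_le_carrier by blast+
  then have "zdim m n V \<le> enat (min d (m * n))"
    by (intro zdim_le_of_trdeg_le) (simp add: min_def)
  moreover have "int d = int s * int r * (int m + int n - int r) - (int s - 1) * (int m + int n - 1)"
    unfolding d_def using hadamard_dim_bound_int[OF assms(1,2) r(2,3)] .
  then have "nat (min (int s * int r * (int m + int n - int r) - (int s - 1) * (int m + int n - 1))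
      (int m * int n)) = min d (m * n)"
    by (metis nat_int of_nat_min of_nat_mult)
  ultimately show ?thesis unfolding V_def by simp
qed

end
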